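(* Let $C(r)$ be a real-analytic regular parameterization of a convex plane arc, extended holomorphically to a complex neighbourhood of its parameter interval, and with $z=s+it$, $t>0$, define $P(s,t)=\tfrac12(C(z)+C(\overline{z}))$, $F(s,t)=i f(s,it)$ (notation of the context) and $Q(s,t)=(P(s,t),F(s,t))$. Then: (1) $(s,t)$ are isothermal parameters of $Q$, i.e. $[Q_s,Q_t,Q_{ss}]=[Q_s,Q_t,Q_{tt}]$ and $[Q_s,Q_t,Q_{st}]=0$, and $Q$ parameterizes a definite improper affine sphere: locally it is the graph of $F$ over the plane with $\det D^2F=+1$; (2) the surface does not depend on the choice of the analytic parameterization of $C$: if $\psi$ is an analytic reparameterization (real on the real line) and $F_1$ is the function built from $C\circ\psi$, then $F_1=F\circ\psi$ and the same surface is obtained; (3) $\Omega(s,t)=-i\,\omega(s,it)$, where $\Omega(s,t)=\tfrac12[P_t,P_s]$ and $\omega(s,t)=\tfrac12[p_s,p_t]$ with $p(s,t)=\tfrac12(C(s+t)+C(s-t))$; moreover $A=\tfrac{i}{4}[C'(z),C''(z)]$ and $B=-\tfrac{i}{4}[C'(\overline{z}),C''(\overline{z})]$, i.e. $A$ and $B$ are $i$ and $-i$ times the corresponding inner quantities $\tfrac14[C'(\cdot),C''(\cdot)]$ and $-\tfrac14[C'(\cdot),C''(\cdot)]$ evaluated at the complexified arguments; (4) consequently, if $C$ is strictly convex, the Pick invariant $J=AB/\Omega^3$ does not vanish.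
   Context: $[X,Y]$ is the $2\times2$ determinant with columns $X,Y$ and $[X,Y,Z]$ the $3\times3$ determinant with columns $X,Y,Z$ (extended to complex vectors); $R$ is the counterclockwise rotation by ninety degrees. The inner area distance in coordinates $(s,t)$ is $f(s,t)=\tfrac14\int_{s-t}^{s+t}[C(r)-p(s,t),C'(r)]\,dr$, with the curve oriented so that this equals half the minimal chord-cut area at $p(s,t)$; $f(s,it)$ is its holomorphic continuation. Treating $z,\overline{z}$ as independent variables, $P_z=\tfrac12C'(z)$, $P_{\overline{z}}=\tfrac12 C'(\overline{z})$, and the structure quantities of the definite sphere are $A=i[P_z,P_{zz}]$, $B=-i[P_{\overline{z}},P_{\overline{z}\overline{z}}]$; the Pick invariant is $J=AB/\Omega^3$. *)

theory Defs
  imports "HOL-Complex_Analysis.Complex_Analysis"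
begin

text \<open>Plane vectors (extended to complex vectors) are pairs of complex numbers,
  space vectors are triples.\<close>

definition det2 :: "complex \<times> complex \<Rightarrow> complex \<times> complex \<Rightarrow> complex" where
  "det2 X Y = fst X * snd Y - snd X * fst Y"

definition det3 :: "complex \<times> complex \<times> complex \<Rightarrow> complex \<times> complex \<times> complex
                      \<Rightarrow> complex \<times> complex \<times> complex \<Rightarrow> complex" where
  "det3 X Y Z = (case X of (x1, x2, x3) \<Rightarrow> case Y of (y1, y2, y3) \<Rightarrow> case Z of (z1, z2, z3) \<Rightarrow>
      x1 * (y2 * z3 - y3 * z2) - y1 * (x2 * z3 - x3 * z2) + z1 * (x2 * y3 - x3 * y2))"

definition vderiv :: "(complex \<Rightarrow> complex \<times> complex) \<Rightarrow> complex \<Rightarrow> complex \<times> complex" where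
  "vderiv C z = (deriv (\<lambda>w. fst (C w)) z, deriv (\<lambda>w. snd (C w)) z)"

definition cpd1 :: "(complex \<Rightarrow> complex \<Rightarrow> complex \<times> complex) \<Rightarrow> complex \<Rightarrow> complex \<Rightarrow> complex \<times> complex" where
  "cpd1 g x y = (deriv (\<lambda>u. fst (g u y)) x, deriv (\<lambda>u. snd (g u y)) x)"

definition cpd2 :: "(complex \<Rightarrow> complex \<Rightarrow> complex \<times> complex) \<Rightarrow> complex \<Rightarrow> complex \<Rightarrow> complex \<times> complex" where
  "cpd2 g x y = (deriv (\<lambda>u. fst (g x u)) y, deriv (\<lambda>u. snd (g x u)) y)"

definition pd1 :: "(real \<times> real \<Rightarrow> 'v::real_normed_vector) \<Rightarrow> real \<times> real \<Rightarrow> 'v" where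
  "pd1 g st = vector_derivative (\<lambda>x. g (x, snd st)) (at (fst st))"

definition pd2 :: "(real \<times> real \<Rightarrow> 'v::real_normed_vector) \<Rightarrow> real \<times> real \<Rightarrow> 'v" where
  "pd2 g st = vector_derivative (\<lambda>y. g (fst st, y)) (at (snd st))"

definition pc :: "(complex \<Rightarrow> complex \<times> complex) \<Rightarrow> complex \<Rightarrow> complex \<Rightarrow> complex \<times> complex" where
  "pc C s \<tau> = (1/2) *\<^sub>R (C (s + \<tau>) + C (s - \<tau>))"

text \<open>For real s, \<tau> this is the real integral; for complex \<tau> it is its holomorphic
  continuation, given by the integral along the straight segment.\<close>
definition fc :: "(complex \<Rightarrow> complex \<times> complex) \<Rightarrow> complex \<Rightarrow> complex \<Rightarrow> complex" where
  "fc C s \<tau> = (1/4) * contour_integral (linepath (s - \<tau>) (s + \<tau>))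
                        (\<lambda>w. det2 (C w - pc C s \<tau>) (vderiv C w))"

definition Pm :: "(complex \<Rightarrow> complex \<times> complex) \<Rightarrow> real \<times> real \<Rightarrow> complex \<times> complex" where
  "Pm C st = (1/2) *\<^sub>R (C (Complex (fst st) (snd st)) + C (Complex (fst st) (- snd st)))"

definition Fm :: "(complex \<Rightarrow> complex \<times> complex) \<Rightarrow> real \<times> real \<Rightarrow> complex" where
  "Fm C st = \<i> * fc C (of_real (fst st)) (\<i> * of_real (snd st))"

definition Qm :: "(complex \<Rightarrow> complex \<times> complex) \<Rightarrow> real \<times> real \<Rightarrow> complex \<times> complex \<times> complex" where
  "Qm C st = (fst (Pm C st), snd (Pm C st), Fm C st)"

definition Omega :: "(complex \<Rightarrow> complex \<times> complex) \<Rightarrow> real \<times> real \<Rightarrow> complex" where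
  "Omega C st = (1/2) * det2 (pd2 (Pm C) st) (pd1 (Pm C) st)"

definition omegac :: "(complex \<Rightarrow> complex \<times> complex) \<Rightarrow> complex \<Rightarrow> complex \<Rightarrow> complex" where
  "omegac C s \<tau> = (1/2) * det2 (cpd1 (pc C) s \<tau>) (cpd2 (pc C) s \<tau>)"

text \<open>P as a function of independent variables z and zbar.\<close>
definition Pzw :: "(complex \<Rightarrow> complex \<times> complex) \<Rightarrow> complex \<Rightarrow> complex \<Rightarrow> complex \<times> complex" where
  "Pzw C z w = (1/2) *\<^sub>R (C z + C w)"

definition Astr :: "(complex \<Rightarrow> complex \<times> complex) \<Rightarrow> real \<times> real \<Rightarrow> complex" where
  "Astr C st = (let z = Complex (fst st) (snd st) in
     \<i> * det2 (cpd1 (Pzw C) z (cnj z)) (cpd1 (cpd1 (Pzw C)) z (cnj z)))"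

definition Bstr :: "(complex \<Rightarrow> complex \<times> complex) \<Rightarrow> real \<times> real \<Rightarrow> complex" where
  "Bstr C st = (let z = Complex (fst st) (snd st) in
     - \<i> * det2 (cpd2 (Pzw C) z (cnj z)) (cpd2 (cpd2 (Pzw C)) z (cnj z)))"

definition Jpick :: "(complex \<Rightarrow> complex \<times> complex) \<Rightarrow> real \<times> real \<Rightarrow> complex" where
  "Jpick C st = Astr C st * Bstr C st / Omega C st ^ 3"

definition sdom :: "complex set \<Rightarrow> (real \<times> real) set" where
  "sdom U = {(s, t). 0 < t \<and> closed_segment (Complex s (- t)) (Complex s t) \<subseteq> U}"

definition definite_graph_at :: "(complex \<Rightarrow> complex \<times> complex) \<Rightarrow> real \<times> real \<Rightarrow> bool" where
  "definite_graph_at C st \<longleftrightarrow>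
     (\<exists>W V (u :: real \<times> real \<Rightarrow> real).
        open W \<and> st \<in> W \<and> open V \<and>
        bij_betw (\<lambda>q. (Re (fst (Pm C q)), Re (snd (Pm C q)))) W V \<and>
        (\<forall>q\<in>W. Fm C q = of_real (u (Re (fst (Pm C q)), Re (snd (Pm C q))))) \<and>
        (\<forall>x\<in>V. u differentiable (at x) \<and> pd1 u differentiable (at x) \<and>
                 pd2 u differentiable (at x) \<and>
                 pd1 (pd1 u) x * pd2 (pd2 u) x - pd1 (pd2 u) x * pd2 (pd1 u) x = 1))"

end

theory Submission
  imports Defs
begin

text \<open>Writing \<open>w\<close> for \<open>z\<close> conjugate and treating \<open>z, w\<close> as independent variables, every
  quantity is an explicit holomorphic expression in \<open>(z, w)\<close>: \<open>P = (C(z) + C(w))/2\<close>, and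
  integrating along the chord gives \<open>F = i/4 (G(z) - G(w) + [C(z), C(w)])\<close> for a primitive \<open>G\<close>
  of \<open>[C, C']\<close>. Then \<open>\<partial>\<^sub>s = \<partial>\<^sub>z + \<partial>\<^sub>w\<close> and \<open>\<partial>\<^sub>t = i(\<partial>\<^sub>z - \<partial>\<^sub>w)\<close>, so
  isothermality becomes a polynomial identity, and the Schwarz reflection principle makes \<open>P\<close>
  and \<open>F\<close> real. Over \<open>x = Re C(z)\<close> the surface is the graph of a function \<open>u\<close> with
  \<open>\<nabla>u = (Im C\<^sub>2(z), -Im C\<^sub>1(z))\<close>; by Cauchy--Riemann, \<open>x\<close> and \<open>\<nabla>u\<close> have the same
  Jacobian determinant as functions of \<open>(s, t)\<close>, whence \<open>det D\<^sup>2u = 1\<close>. Composing with \<open>\<psi>\<close> replaces \<open>G\<close> by the primitive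
  \<open>G \<circ> \<psi>\<close>, which gives reparameterization invariance. Finally \<open>A, B\<close> are \<open>\<plusminus>i/4\<close> times
  the curvature \<open>[C', C'']\<close> at \<open>z, w\<close>, and \<open>\<Omega>\<close> is \<open>i/4 (z - w)\<close> times a divided difference
  tending to minus the curvature on the axis, so \<open>J \<noteq> 0\<close> near a point of nonzero curvature.\<close>

section \<open>Reflection principle and the chord integral\<close>

lemma open_cnj_image: "open S \<Longrightarrow> open (cnj ` (S::complex set))"
  unfolding image_cnj_conv_vimage_cnj by (intro open_vimage) (auto intro: continuous_intros)

lemma convex_cnj_image: "convex S \<Longrightarrow> convex (cnj ` (S::complex set))"
  by (rule convex_linear_image) (simp add: linear_cnj)

lemma of_real_midpoint_islimpt:
  assumes "a < b"
  shows "of_real ((a+b)/2) islimpt (of_real ` {a<..<b} :: complex set)"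
  unfolding islimpt_approachable
proof (intro allI impI)
  fix e :: real assume e: "e > 0"
  define d where "d = min (e/2) ((b-a)/4)"
  define x where "x = complex_of_real ((a+b)/2 + d)"
  have d: "0 < d" "d < e" using e assms by (auto simp: d_def min_def)
  have "(a+b)/2 + d \<in> {a<..<b}" using e assms by (auto simp: d_def min_def field_simps)
  then have "x \<in> of_real ` {a<..<b}" unfolding x_def by (rule imageI)
  moreover have dist: "dist x (of_real ((a+b)/2)) = d"
    using d by (simp add: x_def dist_norm flip: of_real_diff)
  moreover have "x \<noteq> of_real ((a+b)/2)" using dist d by auto
  ultimately show "\<exists>x'\<in>of_real ` {a<..<b}. x' \<noteq> complex_of_real ((a+b)/2) \<and> dist x' (of_real ((a+b)/2)) < e"
    using d by blast
qed

lemma holomorphic_reflection: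
  fixes h :: "complex \<Rightarrow> complex"
  assumes "open S" "convex S" "a < b" "of_real ` {a<..<b} \<subseteq> S" "h holomorphic_on S"
    and real: "\<And>r. r \<in> {a<..<b} \<Longrightarrow> Im (h (of_real r)) = 0"
    and "z \<in> S" "cnj z \<in> S"
  shows "h (cnj z) = cnj (h z)"
proof -
  let ?K = "S \<inter> cnj ` S"
  have oK: "open ?K" and cK: "convex ?K"
    using assms by (simp_all add: open_Int open_cnj_image convex_Int convex_cnj_image)
  have hol: "(\<lambda>z. (cnj \<circ> h \<circ> cnj) z - h z) holomorphic_on ?K"
    by (intro holomorphic_intros holomorphic_on_compose_cnj_cnj oK
        holomorphic_on_subset[OF assms(5)]) auto
  have sub: "of_real ` {a<..<b} \<subseteq> ?K" using assms(4) by force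
  have "(a+b)/2 \<in> {a<..<b}" using assms(3) by auto
  then have mid: "of_real ((a+b)/2) \<in> ?K" using sub by blast
  have "(\<lambda>z. (cnj \<circ> h \<circ> cnj) z - h z) z = 0"
  proof (rule analytic_continuation[OF hol oK convex_connected[OF cK] sub mid
        of_real_midpoint_islimpt[OF assms(3)]])
    fix w assume "w \<in> (of_real ` {a<..<b} :: complex set)"
    then show "(cnj \<circ> h \<circ> cnj) w - h w = 0"
      using real by (auto simp: complex_eq_iff)
  next
    show "z \<in> ?K" using assms(7,8) by (auto intro: image_eqI[of _ _ "cnj z"])
  qed
  then show ?thesis by (simp add: complex_eq_iff)
qed

lemma fc_eq_primitive:
  fixes D :: "complex \<Rightarrow> complex \<times> complex" and S :: "complex set"
  assumes "convex S" "open S"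
    and h1: "(\<lambda>z. fst (D z)) holomorphic_on S" and h2: "(\<lambda>z. snd (D z)) holomorphic_on S"
    and G: "\<And>w. w \<in> S \<Longrightarrow> (G has_field_derivative det2 (D w) (vderiv D w)) (at w)"
    and "s - \<tau> \<in> S" "s + \<tau> \<in> S"
  shows "fc D s \<tau> = 1/4 * (G (s+\<tau>) - G (s-\<tau>) + det2 (D (s+\<tau>)) (D (s-\<tau>)))"
proof -
  define p where "p = pc D s \<tau>"
  define H where "H w = G w - (fst p * snd (D w) - snd p * fst (D w))" for w
  have dH: "(H has_field_derivative det2 (D w - p) (vderiv D w)) (at w within S)" if w: "w \<in> S" for w
  proof -
    have "(H has_field_derivative det2 (D w) (vderiv D w)
          - (fst p * deriv (\<lambda>z. snd (D z)) w - snd p * deriv (\<lambda>z. fst (D z)) w)) (at w)"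
      unfolding H_def
      by (intro DERIV_diff DERIV_cmult G w holomorphic_derivI[OF h1 \<open>open S\<close> w]
          holomorphic_derivI[OF h2 \<open>open S\<close> w])
    moreover have "det2 (D w) (vderiv D w)
        - (fst p * deriv (\<lambda>z. snd (D z)) w - snd p * deriv (\<lambda>z. fst (D z)) w)
        = det2 (D w - p) (vderiv D w)"
      by (simp add: det2_def vderiv_def algebra_simps)
    ultimately show ?thesis by (simp add: has_field_derivative_at_within)
  qed
  have seg: "path_image (linepath (s - \<tau>) (s + \<tau>)) \<subseteq> S"
    using closed_segment_subset assms by simp
  have "((\<lambda>w. det2 (D w - p) (vderiv D w)) has_contour_integral H (s+\<tau>) - H (s-\<tau>))
      (linepath (s - \<tau>) (s + \<tau>))"
    using contour_integral_primitive[OF dH valid_path_linepath seg] by simp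
  then have "fc D s \<tau> = 1/4 * (H (s+\<tau>) - H (s-\<tau>))"
    unfolding fc_def p_def by (simp add: contour_integral_unique)
  then show ?thesis
    unfolding H_def p_def pc_def det2_def by (simp add: algebra_simps scaleR_conv_of_real)
qed

lemma Complex_eq_of_real_add_i:
  "of_real s + \<i> * of_real t = Complex s t" "of_real s - \<i> * of_real t = Complex s (- t)"
  by (simp_all add: complex_eq_iff)

lemma DERIV_holomorphic_compose:
  assumes "h holomorphic_on S" "open S" "(f has_field_derivative f') (at x within T)" "f x \<in> S"
    and "D = deriv h (f x) * f'"
  shows "((\<lambda>u. h (f u)) has_field_derivative D) (at x within T)"
  using DERIV_chain2[OF holomorphic_derivI[OF assms(1,2,4)] assms(3)] assms(5) by simp

lemma pd1_eqI: "((\<lambda>x. f (x, snd q)) has_vector_derivative d) (at (fst q)) \<Longrightarrow> pd1 f q = d"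
  by (simp add: pd1_def vector_derivative_at)

lemma pd2_eqI: "((\<lambda>y. f (fst q, y)) has_vector_derivative d) (at (snd q)) \<Longrightarrow> pd2 f q = d"
  by (simp add: pd2_def vector_derivative_at)

lemma pd1_cong_open:
  assumes "open S" "q \<in> S" and eq: "\<And>p. p \<in> S \<Longrightarrow> f p = g p"
  shows "pd1 f q = pd1 g q"
proof -
  let ?T = "{x. (x, snd q) \<in> S}"
  have T: "open ?T" "fst q \<in> ?T"
    using assms by (auto intro!: open_vimage[of S "\<lambda>x. (x, snd q)", simplified vimage_def]
        continuous_intros)
  have "((\<lambda>x. f (x, snd q)) has_vector_derivative d) (at (fst q)) \<longleftrightarrow>
        ((\<lambda>x. g (x, snd q)) has_vector_derivative d) (at (fst q))" for d
    using has_vector_derivative_transform_within_open[OF _ T, of "\<lambda>x. f (x, snd q)" d "\<lambda>x. g (x, snd q)"]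
      has_vector_derivative_transform_within_open[OF _ T, of "\<lambda>x. g (x, snd q)" d "\<lambda>x. f (x, snd q)"]
      eq by auto
  then show ?thesis unfolding pd1_def vector_derivative_def by simp
qed

lemma pd2_cong_open:
  assumes "open S" "q \<in> S" and eq: "\<And>p. p \<in> S \<Longrightarrow> f p = g p"
  shows "pd2 f q = pd2 g q"
proof -
  let ?T = "{y. (fst q, y) \<in> S}"
  have T: "open ?T" "snd q \<in> ?T"
    using assms by (auto intro!: open_vimage[of S "\<lambda>y. (fst q, y)", simplified vimage_def]
        continuous_intros)
  have "((\<lambda>y. f (fst q, y)) has_vector_derivative d) (at (snd q)) \<longleftrightarrow>
        ((\<lambda>y. g (fst q, y)) has_vector_derivative d) (at (snd q))" for d
    using has_vector_derivative_transform_within_open[OF _ T, of "\<lambda>y. f (fst q, y)" d "\<lambda>y. g (fst q, y)"]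
      has_vector_derivative_transform_within_open[OF _ T, of "\<lambda>y. g (fst q, y)" d "\<lambda>y. f (fst q, y)"]
      eq by auto
  then show ?thesis unfolding pd2_def vector_derivative_def by simp
qed

lemma differentiable_cong_open:
  assumes "open S" "q \<in> S" "\<And>p. p \<in> S \<Longrightarrow> f p = g p" "g differentiable (at q)"
  shows "f differentiable (at q)"
proof -
  obtain D where "(g has_derivative D) (at q)" using assms(4) unfolding differentiable_def by blast
  then have "(f has_derivative D) (at q)"
    by (rule has_derivative_transform_within_open[OF _ assms(1,2)]) (simp add: assms(3))
  then show ?thesis unfolding differentiable_def by blast
qed

lemma pd_has_derivative:
  assumes "(f has_derivative D) (at x)"
  shows "pd1 f x = D (1,0)" "pd2 f x = D (0,1)"
proof -
  have lin: "linear D" using assms has_derivative_linear by blast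
  have "((\<lambda>y. (y, snd x)) has_derivative (\<lambda>h. (h, 0))) (at (fst x))"
    by (rule has_derivative_Pair[OF has_derivative_ident has_derivative_const])
  from has_derivative_compose[OF this] assms
  have "((\<lambda>y. f (y, snd x)) has_derivative (\<lambda>h. D (h, 0))) (at (fst x))" by simp
  moreover have "(\<lambda>h. D (h, 0)) = (\<lambda>h. h *\<^sub>R D (1,0))"
  proof
    fix h :: real
    have "D (h, 0) = D (h *\<^sub>R (1,0))" by simp
    then show "D (h, 0) = h *\<^sub>R D (1,0)" by (simp only: linear_cmul[OF lin])
  qed
  ultimately show "pd1 f x = D (1,0)"
    unfolding pd1_def by (intro vector_derivative_at) (simp add: has_vector_derivative_def)
  have "((\<lambda>y. (fst x, y)) has_derivative (\<lambda>h. (0, h))) (at (snd x))"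
    by (rule has_derivative_Pair[OF has_derivative_const has_derivative_ident])
  from has_derivative_compose[OF this] assms
  have "((\<lambda>y. f (fst x, y)) has_derivative (\<lambda>h. D (0, h))) (at (snd x))" by simp
  moreover have "(\<lambda>h. D (0, h)) = (\<lambda>h. h *\<^sub>R D (0,1))"
  proof
    fix h :: real
    have "D (0, h) = D (h *\<^sub>R (0,1))" by simp
    then show "D (0, h) = h *\<^sub>R D (0,1)" by (simp only: linear_cmul[OF lin])
  qed
  ultimately show "pd2 f x = D (0,1)"
    unfolding pd2_def by (intro vector_derivative_at) (simp add: has_vector_derivative_def)
qed

section \<open>Functions of z = s + i t and w = s - i t\<close>

abbreviation z_of :: "real \<times> real \<Rightarrow> complex" where
  "z_of q \<equiv> Complex (fst q) (snd q)"

abbreviation zbar_of :: "real \<times> real \<Rightarrow> complex" where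
  "zbar_of q \<equiv> Complex (fst q) (- snd q)"

definition diag :: "(complex \<Rightarrow> complex \<Rightarrow> 'a) \<Rightarrow> real \<times> real \<Rightarrow> 'a" where
  "diag E q = E (z_of q) (zbar_of q)"

lemma sdom_endpoints:
  "(s, t) \<in> sdom S \<Longrightarrow> Complex s t \<in> S" "(s, t) \<in> sdom S \<Longrightarrow> Complex s (- t) \<in> S"
  by (auto simp: sdom_def)

lemma has_vector_derivative_diag_fst:
  assumes "((\<lambda>u. E (u + \<i> * of_real (snd q)) (u - \<i> * of_real (snd q))) has_field_derivative diag E' q)
      (at (of_real (fst q)))"
  shows "((\<lambda>x. diag E (x, snd q)) has_vector_derivative diag E' q) (at (fst q))"
  using has_vector_derivative_real_field[OF assms] by (simp add: diag_def Complex_eq_of_real_add_i)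

lemma has_vector_derivative_diag_snd:
  assumes "((\<lambda>v. E (of_real (fst q) + \<i> * v) (of_real (fst q) - \<i> * v)) has_field_derivative diag E' q)
      (at (of_real (snd q)))"
  shows "((\<lambda>y. diag E (fst q, y)) has_vector_derivative diag E' q) (at (snd q))"
  using has_vector_derivative_real_field[OF assms] by (simp add: diag_def Complex_eq_of_real_add_i)

lemma pd1_diag2:
  assumes "((\<lambda>u. E1 (u + \<i> * of_real (snd q)) (u - \<i> * of_real (snd q))) has_field_derivative diag E1' q)
      (at (of_real (fst q)))"
    and "((\<lambda>u. E2 (u + \<i> * of_real (snd q)) (u - \<i> * of_real (snd q))) has_field_derivative diag E2' q)
      (at (of_real (fst q)))"
  shows "pd1 (\<lambda>q. (diag E1 q, diag E2 q)) q = (diag E1' q, diag E2' q)"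
  by (rule pd1_eqI) (intro has_vector_derivative_Pair has_vector_derivative_diag_fst assms)

lemma pd2_diag2:
  assumes "((\<lambda>v. E1 (of_real (fst q) + \<i> * v) (of_real (fst q) - \<i> * v)) has_field_derivative diag E1' q)
      (at (of_real (snd q)))"
    and "((\<lambda>v. E2 (of_real (fst q) + \<i> * v) (of_real (fst q) - \<i> * v)) has_field_derivative diag E2' q)
      (at (of_real (snd q)))"
  shows "pd2 (\<lambda>q. (diag E1 q, diag E2 q)) q = (diag E1' q, diag E2' q)"
  by (rule pd2_eqI) (intro has_vector_derivative_Pair has_vector_derivative_diag_snd assms)

lemma pd1_diag3:
  assumes "((\<lambda>u. E1 (u + \<i> * of_real (snd q)) (u - \<i> * of_real (snd q))) has_field_derivative diag E1' q)
      (at (of_real (fst q)))"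
    and "((\<lambda>u. E2 (u + \<i> * of_real (snd q)) (u - \<i> * of_real (snd q))) has_field_derivative diag E2' q)
      (at (of_real (fst q)))"
    and "((\<lambda>u. E3 (u + \<i> * of_real (snd q)) (u - \<i> * of_real (snd q))) has_field_derivative diag E3' q)
      (at (of_real (fst q)))"
  shows "pd1 (\<lambda>q. (diag E1 q, diag E2 q, diag E3 q)) q = (diag E1' q, diag E2' q, diag E3' q)"
  by (rule pd1_eqI) (intro has_vector_derivative_Pair has_vector_derivative_diag_fst assms)

lemma pd2_diag3:
  assumes "((\<lambda>v. E1 (of_real (fst q) + \<i> * v) (of_real (fst q) - \<i> * v)) has_field_derivative diag E1' q)
      (at (of_real (snd q)))"
    and "((\<lambda>v. E2 (of_real (fst q) + \<i> * v) (of_real (fst q) - \<i> * v)) has_field_derivative diag E2' q)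
      (at (of_real (snd q)))"
    and "((\<lambda>v. E3 (of_real (fst q) + \<i> * v) (of_real (fst q) - \<i> * v)) has_field_derivative diag E3' q)
      (at (of_real (snd q)))"
  shows "pd2 (\<lambda>q. (diag E1 q, diag E2 q, diag E3 q)) q = (diag E1' q, diag E2' q, diag E3' q)"
  by (rule pd2_eqI) (intro has_vector_derivative_Pair has_vector_derivative_diag_snd assms)

text \<open>On the diagonal \<open>\<partial>\<^sub>s\<close> acts as \<open>\<partial>\<^sub>z + \<partial>\<^sub>w\<close> and \<open>\<partial>\<^sub>t\<close> as \<open>i(\<partial>\<^sub>z - \<partial>\<^sub>w)\<close>, so these two
  expressions are closed under \<open>\<partial>\<^sub>s\<close> and \<open>\<partial>\<^sub>t\<close>.\<close>

definition avg :: "(complex \<Rightarrow> complex) \<Rightarrow> complex \<Rightarrow> complex \<Rightarrow> complex" where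
  "avg h z w = (h z + h w) / 2"

definition iskew :: "(complex \<Rightarrow> complex) \<Rightarrow> complex \<Rightarrow> complex \<Rightarrow> complex" where
  "iskew h z w = \<i> * (h z - h w) / 2"

context
  fixes h :: "complex \<Rightarrow> complex" and S :: "complex set" and q :: "real \<times> real"
  assumes h: "h holomorphic_on S" "open S" and q: "z_of q \<in> S" "zbar_of q \<in> S"
begin

lemma avg_has_derivative_fst:
  "((\<lambda>u. avg h (u + \<i> * of_real (snd q)) (u - \<i> * of_real (snd q))) has_field_derivative
     diag (avg (deriv h)) q) (at (of_real (fst q)))"
  unfolding avg_def diag_def
  by (rule derivative_eq_intros DERIV_holomorphic_compose[OF h] refl
      | simp add: Complex_eq_of_real_add_i q)+

lemma avg_has_derivative_snd:
  "((\<lambda>v. avg h (of_real (fst q) + \<i> * v) (of_real (fst q) - \<i> * v)) has_field_derivative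
     diag (iskew (deriv h)) q) (at (of_real (snd q)))"
  unfolding avg_def iskew_def diag_def
  by (rule derivative_eq_intros DERIV_holomorphic_compose[OF h] refl
      | simp add: Complex_eq_of_real_add_i q)+ (simp add: algebra_simps)

lemma iskew_has_derivative_fst:
  "((\<lambda>u. iskew h (u + \<i> * of_real (snd q)) (u - \<i> * of_real (snd q))) has_field_derivative
     diag (iskew (deriv h)) q) (at (of_real (fst q)))"
  unfolding iskew_def diag_def
  by (rule derivative_eq_intros DERIV_holomorphic_compose[OF h] refl
      | simp add: Complex_eq_of_real_add_i q)+

lemma iskew_has_derivative_snd:
  "((\<lambda>v. iskew h (of_real (fst q) + \<i> * v) (of_real (fst q) - \<i> * v)) has_field_derivative
     diag (\<lambda>z w. - avg (deriv h) z w) q) (at (of_real (snd q)))"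
  unfolding avg_def iskew_def diag_def
  by (rule derivative_eq_intros DERIV_holomorphic_compose[OF h] refl
      | simp add: Complex_eq_of_real_add_i q)+ (simp add: algebra_simps)

end

lemmas diag_derivatives =
  avg_has_derivative_fst avg_has_derivative_snd iskew_has_derivative_fst iskew_has_derivative_snd

lemma bounded_linear_z_of: "bounded_linear z_of"
proof -
  have "z_of = (\<lambda>q. fst q *\<^sub>R 1 + snd q *\<^sub>R \<i>)" by (auto simp: complex_eq_iff)
  then show ?thesis
    by (simp add: bounded_linear_add bounded_linear_compose[OF bounded_linear_scaleR_left]
        bounded_linear_fst bounded_linear_snd)
qed

lemma bounded_linear_zbar_of: "bounded_linear zbar_of"
proof -
  have "zbar_of = cnj \<circ> z_of" by (auto simp: complex_eq_iff)
  then show ?thesis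
    using bounded_linear_compose[OF bounded_linear_cnj bounded_linear_z_of] by (simp add: o_def)
qed

lemma has_derivative_z_of_compose:
  "(h has_field_derivative h') (at (z_of p)) \<Longrightarrow>
     ((\<lambda>q. h (z_of q)) has_derivative (\<lambda>d. h' * z_of d)) (at p)"
  using has_derivative_compose[OF bounded_linear_imp_has_derivative[OF bounded_linear_z_of]]
  by (simp add: has_field_derivative_def)

lemma has_derivative_zbar_of_compose:
  "(h has_field_derivative h') (at (zbar_of p)) \<Longrightarrow>
     ((\<lambda>q. h (zbar_of q)) has_derivative (\<lambda>d. h' * zbar_of d)) (at p)"
  using has_derivative_compose[OF bounded_linear_imp_has_derivative[OF bounded_linear_zbar_of]]
  by (simp add: has_field_derivative_def)

lemma differentiable_holomorphic_z_of:
  "h holomorphic_on S \<Longrightarrow> open S \<Longrightarrow> z_of p \<in> S \<Longrightarrow> (\<lambda>q. h (z_of q)) differentiable (at p)"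
  using has_derivative_z_of_compose[OF holomorphic_derivI] unfolding differentiable_def by blast

lemma differentiable_holomorphic_zbar_of:
  "h holomorphic_on S \<Longrightarrow> open S \<Longrightarrow> zbar_of p \<in> S \<Longrightarrow> (\<lambda>q. h (zbar_of q)) differentiable (at p)"
  using has_derivative_zbar_of_compose[OF holomorphic_derivI] unfolding differentiable_def by blast

definition divided_difference :: "(complex \<Rightarrow> complex) \<Rightarrow> real \<times> real \<Rightarrow> complex" where
  "divided_difference h q = (h (z_of q) - h (zbar_of q)) / (z_of q - zbar_of q)"

lemma det2_eq_mult_divided:
  fixes d x1 x2 y1 y2 :: complex
  assumes "d \<noteq> 0"
  shows "det2 (x1, x2) (y1, y2) = d * det2 ((x1 - y1) / d, (x2 - y2) / d) (y1, y2)"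
proof -
  have "d * det2 ((x1 - y1) / d, (x2 - y2) / d) (y1, y2) = (x1 - y1) * y2 - (x2 - y2) * y1"
    using assms by (simp add: det2_def right_diff_distrib)
  also have "\<dots> = det2 (x1, x2) (y1, y2)" by (simp add: det2_def algebra_simps)
  finally show ?thesis by simp
qed

lemma dist_Complex_of_real:
  "dist (Complex s t) (of_real s0) = dist (s, t) (s0, 0)"
  "dist (Complex s (- t)) (of_real s0) = dist (s, t) (s0, 0)"
proof -
  have "Complex s t - of_real s0 = Complex (s - s0) t"
    "Complex s (- t) - of_real s0 = Complex (s - s0) (- t)"
    by (simp_all add: complex_eq_iff)
  then show "dist (Complex s t) (of_real s0) = dist (s, t) (s0, 0)"
    "dist (Complex s (- t)) (of_real s0) = dist (s, t) (s0, 0)"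
    unfolding dist_Pair_Pair by (simp_all add: dist_norm complex_norm dist_real_def)
qed

lemma divided_difference_tendsto:
  assumes f: "f holomorphic_on S" and "open S" and x0: "of_real s0 \<in> S"
  shows "(divided_difference f \<longlongrightarrow> deriv f (of_real s0)) (at (s0, 0) within {q. snd q > 0})"
  unfolding tendsto_iff divided_difference_def
proof (intro allI impI)
  fix e :: real assume e: "e > 0"
  let ?x0 = "complex_of_real s0" and ?c = "deriv f (of_real s0)"
  have "isCont (deriv f) ?x0"
    using holomorphic_on_imp_continuous_on[OF holomorphic_deriv[OF f \<open>open S\<close>]] \<open>open S\<close> x0
    by (simp add: continuous_on_eq_continuous_at)
  then obtain r1 where r1: "r1 > 0" "\<And>u. dist u ?x0 < r1 \<Longrightarrow> dist (deriv f u) ?c < e/2"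
    using e unfolding continuous_at_eps_delta by (metis half_gt_zero)
  obtain r2 where r2: "r2 > 0" "ball ?x0 r2 \<subseteq> S" using \<open>open S\<close> x0 openE by blast
  define r where "r = min r1 r2"
  have "norm ((f z - ?c * z) - (f w - ?c * w)) \<le> e/2 * norm (z - w)"
    if "z \<in> ball ?x0 r" "w \<in> ball ?x0 r" for z w
  proof (rule field_differentiable_bound[OF convex_ball _ _ that])
    fix u assume u: "u \<in> ball ?x0 r"
    then have "u \<in> S" using r2 by (auto simp: r_def)
    then show "((\<lambda>u. f u - ?c * u) has_field_derivative deriv f u - ?c) (at u within ball ?x0 r)"
      by (auto intro!: derivative_eq_intros holomorphic_derivI[OF f \<open>open S\<close>])
    have "dist u ?x0 < r1" using u by (simp add: r_def dist_commute)
    from r1(2)[OF this] show "norm (deriv f u - ?c) \<le> e/2" by (simp add: dist_norm)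
  qed
  moreover have "(f z - f w) / (z - w) - ?c = ((f z - ?c * z) - (f w - ?c * w)) / (z - w)"
    if "z \<noteq> w" for z w
    using that by (simp add: field_simps)
  ultimately have "dist ((f z - f w) / (z - w)) ?c \<le> e/2"
    if "z \<in> ball ?x0 r" "w \<in> ball ?x0 r" "z \<noteq> w" for z w
    using that by (simp add: dist_norm norm_divide divide_le_eq)
  then have "dist ((f z - f w) / (z - w)) ?c < e"
    if "z \<in> ball ?x0 r" "w \<in> ball ?x0 r" "z \<noteq> w" for z w
    using that e by fastforce
  moreover have "z_of q \<in> ball ?x0 r" "zbar_of q \<in> ball ?x0 r" "z_of q \<noteq> zbar_of q"
    if "0 < snd q" "dist q (s0, 0) < r" for q
    using that dist_Complex_of_real[of "fst q" "snd q" s0] by (auto simp: dist_commute complex_eq_iff)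
  moreover have "r > 0" using r1 r2 by (simp add: r_def)
  ultimately show "\<forall>\<^sub>F q in at (s0, 0) within {q. 0 < snd q}.
      dist ((f (z_of q) - f (zbar_of q)) / (z_of q - zbar_of q)) ?c < e"
    unfolding eventually_at by (metis mem_Collect_eq)
qed

text \<open>The isothermality identities of \<open>Q\<close> as polynomial identities in the values
  \<open>x, x', x''\<close> of \<open>C, C', C''\<close> at \<open>z\<close> and \<open>y, y', y''\<close> at \<open>w\<close>; \<open>gx = [x, x']\<close>, \<open>hx = [x, x'']\<close>.\<close>

lemma isothermal_algebra:
  fixes x1 x2 x1' x2' x1'' x2'' y1 y2 y1' y2' y1'' y2'' gx gy hx hy :: complex
  assumes "gx = x1*x2' - x2*x1'" "gy = y1*y2' - y2*y1'" "hx = x1*x2'' - x2*x1''" "hy = y1*y2'' - y2*y1''"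
  defines "Qs \<equiv> ((x1' + y1')/2, (x2' + y2')/2, \<i>/4 * (gx - gy + x1'*y2 + x1*y2' - x2'*y1 - x2*y1'))"
    and "Qt \<equiv> (\<i>*(x1' - y1')/2, \<i>*(x2' - y2')/2, -1/4 * (gx + gy + x1'*y2 - x1*y2' - x2'*y1 + x2*y1'))"
  shows "det3 Qs Qt ((x1'' + y1'')/2, (x2'' + y2'')/2,
           \<i>/4 * (hx - hy + x1''*y2 + 2*x1'*y2' + x1*y2'' - x2''*y1 - 2*x2'*y1' - x2*y1''))
       = det3 Qs Qt (- ((x1'' + y1'')/2), - ((x2'' + y2'')/2),
           -\<i>/4 * (hx - hy + x1''*y2 - 2*x1'*y2' + x1*y2'' - x2''*y1 + 2*x2'*y1' - x2*y1''))"
    and "det3 Qs Qt (\<i>*(x1'' - y1'')/2, \<i>*(x2'' - y2'')/2,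
           -1/4 * (hx + hy + x1''*y2 - x1*y2'' - x2''*y1 + x2*y1'')) = 0"
  unfolding assms det3_def case_prod_conv by (simp_all add: field_simps ring_distribs)

definition mat2 :: "real \<Rightarrow> real \<Rightarrow> real \<Rightarrow> real \<Rightarrow> (real \<times> real) \<Rightarrow>\<^sub>L (real \<times> real)" where
  "mat2 a b c d = Blinfun (\<lambda>v. (a * fst v + b * snd v, c * fst v + d * snd v))"

lemma mat2_apply: "blinfun_apply (mat2 a b c d) v = (a * fst v + b * snd v, c * fst v + d * snd v)"
proof -
  have "bounded_linear (\<lambda>v::real \<times> real. (a * fst v + b * snd v, c * fst v + d * snd v))"
    unfolding linear_conv_bounded_linear[symmetric] by (rule linearI) (auto simp: algebra_simps)
  then show ?thesis unfolding mat2_def by (simp add: bounded_linear_Blinfun_apply)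
qed

lemma continuous_on_mat2:
  assumes "continuous_on S a" "continuous_on S b" "continuous_on S c" "continuous_on S d"
  shows "continuous_on S (\<lambda>x. mat2 (a x) (b x) (c x) (d x))"
proof -
  have decomp: "mat2 a' b' c' d' = a' *\<^sub>R mat2 1 0 0 0 + b' *\<^sub>R mat2 0 1 0 0 + c' *\<^sub>R mat2 0 0 1 0
      + d' *\<^sub>R mat2 0 0 0 1" for a' b' c' d'
    by (rule blinfun_eqI) (simp add: mat2_apply plus_blinfun.rep_eq scaleR_blinfun.rep_eq)
  show ?thesis by (subst decomp) (intro continuous_intros assms)
qed

lemma mat2_inverse:
  assumes "a * d - b * c \<noteq> 0"
  shows "mat2 (d / (a*d - b*c)) (- b / (a*d - b*c)) (- c / (a*d - b*c)) (a / (a*d - b*c))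
           o\<^sub>L mat2 a b c d = id_blinfun"
proof (rule blinfun_eqI)
  fix v :: "real \<times> real"
  obtain x y where v: "v = (x, y)" by (cases v)
  define D where "D = a * d - b * c"
  have D: "D \<noteq> 0" using assms D_def by simp
  have "d / D * (a * x + b * y) + - b / D * (c * x + d * y) = (d * (a * x + b * y) - b * (c * x + d * y)) / D"
    "- c / D * (a * x + b * y) + a / D * (c * x + d * y) = (a * (c * x + d * y) - c * (a * x + b * y)) / D"
    by (simp_all add: diff_divide_distrib add_divide_distrib)
  moreover have "d * (a * x + b * y) - b * (c * x + d * y) = x * D"
    "a * (c * x + d * y) - c * (a * x + b * y) = y * D"
    by (simp_all add: D_def algebra_simps)
  ultimately show "blinfun_apply (mat2 (d / (a*d - b*c)) (- b / (a*d - b*c)) (- c / (a*d - b*c))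
      (a / (a*d - b*c)) o\<^sub>L mat2 a b c d) v = blinfun_apply id_blinfun v"
    using D by (simp add: v mat2_apply flip: D_def)
qed

text \<open>If the real matrix with rows \<open>(Re \<alpha>, -Im \<alpha>)\<close> and \<open>(Re \<beta>, -Im \<beta>)\<close> has inverse columns
  \<open>(x1, y1)\<close>, \<open>(x2, y2)\<close>, then the Jacobian of \<open>(Im \<beta>, -Im \<alpha>)\<close> along those columns has
  determinant one: this is the Cauchy--Riemann relation behind \<open>det D\<^sup>2 u = 1\<close>.\<close>

lemma cauchy_riemann_det_one:
  fixes ar ai br bi x1 y1 x2 y2 :: real
  assumes "ar*x1 - ai*y1 = 1" "br*x1 - bi*y1 = 0" "ar*x2 - ai*y2 = 0" "br*x2 - bi*y2 = 1"
  shows "(br*y1 + bi*x1) * (-(ar*y2 + ai*x2)) - (-(ar*y1 + ai*x1)) * (br*y2 + bi*x2) = 1"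
proof -
  have "(br*y1 + bi*x1) * (-(ar*y2 + ai*x2)) - (-(ar*y1 + ai*x1)) * (br*y2 + bi*x2)
      = (ar*x1 - ai*y1) * (br*x2 - bi*y2) - (br*x1 - bi*y1) * (ar*x2 - ai*y2)"
    by (simp add: algebra_simps)
  then show ?thesis using assms by simp
qed

locale analytic_arc =
  fixes C :: "complex \<Rightarrow> complex \<times> complex" and U :: "complex set" and a b :: real
  assumes open_U: "open U" and convex_U: "convex U" and ab: "a < b"
    and interval_in_U: "of_real ` {a<..<b} \<subseteq> U"
    and holomorphic_fst_C: "(\<lambda>z. fst (C z)) holomorphic_on U"
    and holomorphic_snd_C: "(\<lambda>z. snd (C z)) holomorphic_on U"
    and real_on_interval: "\<forall>r\<in>{a<..<b}. Im (fst (C (of_real r))) = 0 \<and> Im (snd (C (of_real r))) = 0"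
begin

definition "C1 z = fst (C z)"
definition "C2 z = snd (C z)"
definition "C1' = deriv C1"
definition "C2' = deriv C2"
definition "C1'' = deriv C1'"
definition "C2'' = deriv C2'"

lemma holomorphic_C1: "C1 holomorphic_on U" and holomorphic_C2: "C2 holomorphic_on U"
  using holomorphic_fst_C holomorphic_snd_C by (simp_all add: C1_def[abs_def] C2_def[abs_def])

lemma holomorphic_C1': "C1' holomorphic_on U" and holomorphic_C2': "C2' holomorphic_on U"
  unfolding C1'_def C2'_def by (simp_all add: holomorphic_deriv holomorphic_C1 holomorphic_C2 open_U)

lemma holomorphic_C1'': "C1'' holomorphic_on U" and holomorphic_C2'': "C2'' holomorphic_on U"
  unfolding C1''_def C2''_def by (simp_all add: holomorphic_deriv holomorphic_C1' holomorphic_C2' open_U)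

lemmas holomorphic_components =
  holomorphic_C1 holomorphic_C2 holomorphic_C1' holomorphic_C2' holomorphic_C1'' holomorphic_C2''

lemmas DERIV_C_compose =
  DERIV_holomorphic_compose[OF holomorphic_C1 open_U, folded C1'_def]
  DERIV_holomorphic_compose[OF holomorphic_C2 open_U, folded C2'_def]
  DERIV_holomorphic_compose[OF holomorphic_C1' open_U, folded C1''_def]
  DERIV_holomorphic_compose[OF holomorphic_C2' open_U, folded C2''_def]

lemma DERIV_C1: "z \<in> U \<Longrightarrow> (C1 has_field_derivative C1' z) (at z)"
  and DERIV_C2: "z \<in> U \<Longrightarrow> (C2 has_field_derivative C2' z) (at z)"
  unfolding C1'_def C2'_def
  by (simp_all add: holomorphic_derivI[OF _ open_U] holomorphic_C1 holomorphic_C2)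

lemma vderiv_C: "vderiv C z = (C1' z, C2' z)"
  by (simp add: vderiv_def C1'_def C2'_def C1_def[abs_def] C2_def[abs_def])

lemma vderiv_vderiv_C: "vderiv (vderiv C) z = (C1'' z, C2'' z)"
proof -
  have "(\<lambda>w. fst (vderiv C w)) = C1'" "(\<lambda>w. snd (vderiv C w)) = C2'" by (auto simp: vderiv_C)
  then show ?thesis by (simp add: vderiv_def C1''_def C2''_def)
qed

lemma C1_cnj: "z \<in> U \<Longrightarrow> cnj z \<in> U \<Longrightarrow> C1 (cnj z) = cnj (C1 z)"
  and C2_cnj: "z \<in> U \<Longrightarrow> cnj z \<in> U \<Longrightarrow> C2 (cnj z) = cnj (C2 z)"
  using holomorphic_reflection[OF open_U convex_U ab interval_in_U holomorphic_C1]
    holomorphic_reflection[OF open_U convex_U ab interval_in_U holomorphic_C2] real_on_interval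
  by (simp_all add: C1_def C2_def)

definition "Usym = U \<inter> cnj ` U"

lemma open_Usym: "open Usym"
  unfolding Usym_def using open_U open_cnj_image by blast

lemma convex_Usym: "convex Usym"
  unfolding Usym_def using convex_U convex_cnj_image convex_Int by blast

lemma mem_Usym_iff: "z \<in> Usym \<longleftrightarrow> z \<in> U \<and> cnj z \<in> U"
  unfolding Usym_def by (auto intro: image_eqI[of _ _ "cnj z"])

lemma deriv_cnj_eq:
  assumes hf: "f holomorphic_on U" and rf: "\<And>z. z \<in> Usym \<Longrightarrow> f (cnj z) = cnj (f z)"
    and z: "z \<in> Usym"
  shows "deriv f (cnj z) = cnj (deriv f z)"
proof -
  have zU: "z \<in> U" "cnj z \<in> U" using z mem_Usym_iff by auto
  have "((cnj \<circ> f \<circ> cnj) has_field_derivative cnj (deriv f (cnj z))) (at z)"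
    by (rule has_field_derivative_cnj_cnj) (simp add: holomorphic_derivI[OF hf open_U zU(2)])
  then have "(f has_field_derivative cnj (deriv f (cnj z))) (at z)"
    by (rule has_field_derivative_transform_within_open[OF _ open_Usym z]) (simp add: rf)
  then show ?thesis
    using DERIV_unique holomorphic_derivI[OF hf open_U zU(1)] by fastforce
qed

lemma C1'_cnj: "z \<in> Usym \<Longrightarrow> C1' (cnj z) = cnj (C1' z)"
  and C2'_cnj: "z \<in> Usym \<Longrightarrow> C2' (cnj z) = cnj (C2' z)"
  unfolding C1'_def C2'_def
  by (intro deriv_cnj_eq holomorphic_C1 holomorphic_C2; simp add: mem_Usym_iff C1_cnj C2_cnj)+

section \<open>The area primitive and the closed form of \<open>F\<close>\<close>

definition "area_density z = C1 z * C2' z - C2 z * C1' z"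

definition "area_density' z = C1 z * C2'' z - C2 z * C1'' z"

lemma holomorphic_area_density: "area_density holomorphic_on U"
  unfolding area_density_def[abs_def] by (intro holomorphic_intros holomorphic_components)

lemma det2_C_vderiv_C: "det2 (C w) (vderiv C w) = area_density w"
  by (simp add: det2_def vderiv_C area_density_def C1_def C2_def)

definition "area_primitive = (SOME G. \<forall>z\<in>U. (G has_field_derivative area_density z) (at z))"

lemma DERIV_area_primitive: "z \<in> U \<Longrightarrow> (area_primitive has_field_derivative area_density z) (at z)"
proof -
  obtain G where "\<And>z. z \<in> U \<Longrightarrow> (G has_field_derivative area_density z) (at z within U)"
    using holomorphic_convex_primitive'[OF convex_U open_U holomorphic_area_density] by blast
  then have "\<exists>G. \<forall>z\<in>U. (G has_field_derivative area_density z) (at z)"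
    using open_U by (metis at_within_open)
  then have "\<forall>z\<in>U. (area_primitive has_field_derivative area_density z) (at z)"
    unfolding area_primitive_def by (rule someI_ex)
  then show "z \<in> U \<Longrightarrow> ?thesis" by blast
qed

lemma holomorphic_area_primitive: "area_primitive holomorphic_on U"
  using DERIV_area_primitive open_U
  by (auto simp: holomorphic_on_def field_differentiable_def intro: has_field_derivative_at_within)

lemma DERIV_area_primitive_compose:
  assumes "(f has_field_derivative f') (at x within T)" "f x \<in> U" "D = area_density (f x) * f'"
  shows "((\<lambda>u. area_primitive (f u)) has_field_derivative D) (at x within T)"
  using DERIV_chain2[OF DERIV_area_primitive[OF assms(2)] assms(1)] assms(3) by simp

lemma DERIV_area_density_compose:
  assumes "(f has_field_derivative f') (at x within T)" "f x \<in> U" "D = area_density' (f x) * f'"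
  shows "((\<lambda>u. area_density (f u)) has_field_derivative D) (at x within T)"
  unfolding area_density_def
  by (rule derivative_eq_intros DERIV_C_compose assms
      | simp add: assms algebra_simps area_density'_def)+

text \<open>\<open>cnj \<circ> G \<circ> cnj - G\<close> has derivative zero because \<open>[C, C']\<close> commutes with conjugation,
  so it is constant on the convex set \<open>Usym\<close>.\<close>

lemma area_primitive_cnj:
  assumes z: "z \<in> Usym" shows "Re (area_primitive z - area_primitive (cnj z)) = 0"
proof -
  let ?G = area_primitive
  have d0: "((\<lambda>w. (cnj \<circ> ?G \<circ> cnj) w - ?G w) has_field_derivative 0) (at w within Usym)"
    if w: "w \<in> Usym" for w
  proof -
    have wU: "w \<in> U" "cnj w \<in> U" using w mem_Usym_iff by auto
    have "((cnj \<circ> ?G \<circ> cnj) has_field_derivative cnj (area_density (cnj w))) (at w)"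
      by (rule has_field_derivative_cnj_cnj) (simp add: DERIV_area_primitive wU)
    moreover have "cnj (area_density (cnj w)) = area_density w"
      using wU w by (simp add: area_density_def C1_cnj C2_cnj C1'_cnj C2'_cnj)
    ultimately have "((cnj \<circ> ?G \<circ> cnj) has_field_derivative area_density w) (at w)" by simp
    then have "((\<lambda>w. (cnj \<circ> ?G \<circ> cnj) w - ?G w) has_field_derivative area_density w - area_density w) (at w)"
      by (intro DERIV_diff DERIV_area_primitive wU)
    then show ?thesis by (simp add: has_field_derivative_at_within)
  qed
  have "cnj z \<in> Usym" using z mem_Usym_iff by auto
  then have "(\<lambda>w. (cnj \<circ> ?G \<circ> cnj) w - ?G w) z = (\<lambda>w. (cnj \<circ> ?G \<circ> cnj) w - ?G w) (cnj z)"
    using has_field_derivative_zero_constant[OF convex_Usym d0] z by metis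
  then show ?thesis by (simp add: complex_eq_iff)
qed

definition "F_zw z w = \<i>/4 * (area_primitive z - area_primitive w + C1 z * C2 w - C2 z * C1 w)"

definition "Dom = {q. z_of q \<in> U \<and> zbar_of q \<in> U}"

lemma open_Dom: "open Dom"
proof -
  have "Dom = z_of -` U \<inter> zbar_of -` U" by (auto simp: Dom_def)
  then show ?thesis
    using open_U by (auto intro!: open_vimage linear_continuous_on
        bounded_linear_z_of bounded_linear_zbar_of)
qed

lemma sdom_subset_Dom: "sdom U \<subseteq> Dom"
  by (auto simp: sdom_def Dom_def)

lemma Dom_z_zbar: "q \<in> Dom \<Longrightarrow> z_of q \<in> U" "q \<in> Dom \<Longrightarrow> zbar_of q \<in> U"
  by (simp_all add: Dom_def)

lemma Fm_eq_F_zw: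
  assumes "q \<in> Dom" shows "Fm C q = diag F_zw q"
proof -
  have "fc C (of_real (fst q)) (\<i> * of_real (snd q))
      = 1/4 * (area_primitive (z_of q) - area_primitive (zbar_of q) + det2 (C (z_of q)) (C (zbar_of q)))"
    using fc_eq_primitive[OF convex_U open_U holomorphic_fst_C holomorphic_snd_C, of area_primitive]
      assms by (simp add: Dom_def Complex_eq_of_real_add_i det2_C_vderiv_C DERIV_area_primitive)
  then show ?thesis
    by (simp add: Fm_def F_zw_def diag_def det2_def C1_def C2_def)
qed

lemma Pm_eq_diag: "Pm C = (\<lambda>q. (diag (avg C1) q, diag (avg C2) q))"
  by (rule ext) (simp add: Pm_def diag_def avg_def C1_def C2_def scaleR_prod_def
      scaleR_conv_of_real algebra_simps)

lemma Qm_eq_diag: "q \<in> Dom \<Longrightarrow> Qm C q = (diag (avg C1) q, diag (avg C2) q, diag F_zw q)"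
  by (simp add: Qm_def Pm_eq_diag Fm_eq_F_zw)

definition "F_s z w = \<i>/4 * (area_density z - area_density w
    + C1' z * C2 w + C1 z * C2' w - C2' z * C1 w - C2 z * C1' w)"
definition "F_t z w = -1/4 * (area_density z + area_density w
    + C1' z * C2 w - C1 z * C2' w - C2' z * C1 w + C2 z * C1' w)"
definition "F_ss z w = \<i>/4 * (area_density' z - area_density' w
    + C1'' z * C2 w + 2 * C1' z * C2' w + C1 z * C2'' w - C2'' z * C1 w - 2 * C2' z * C1' w - C2 z * C1'' w)"
definition "F_tt z w = -\<i>/4 * (area_density' z - area_density' w
    + C1'' z * C2 w - 2 * C1' z * C2' w + C1 z * C2'' w - C2'' z * C1 w + 2 * C2' z * C1' w - C2 z * C1'' w)"
definition "F_st z w = -1/4 * (area_density' z + area_density' w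
    + C1'' z * C2 w - C1 z * C2'' w - C2'' z * C1 w + C2 z * C1'' w)"

lemma F_zw_derivatives:
  assumes "q \<in> Dom"
  shows "((\<lambda>u. F_zw (u + \<i> * of_real (snd q)) (u - \<i> * of_real (snd q))) has_field_derivative
      diag F_s q) (at (of_real (fst q)))"
    and "((\<lambda>v. F_zw (of_real (fst q) + \<i> * v) (of_real (fst q) - \<i> * v)) has_field_derivative
      diag F_t q) (at (of_real (snd q)))"
    and "((\<lambda>u. F_s (u + \<i> * of_real (snd q)) (u - \<i> * of_real (snd q))) has_field_derivative
      diag F_ss q) (at (of_real (fst q)))"
    and "((\<lambda>v. F_t (of_real (fst q) + \<i> * v) (of_real (fst q) - \<i> * v)) has_field_derivative
      diag F_tt q) (at (of_real (snd q)))"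
    and "((\<lambda>v. F_s (of_real (fst q) + \<i> * v) (of_real (fst q) - \<i> * v)) has_field_derivative
      diag F_st q) (at (of_real (snd q)))"
  using assms unfolding Dom_def diag_def F_zw_def F_s_def F_t_def F_ss_def F_tt_def F_st_def
  by (auto intro!: derivative_eq_intros DERIV_C_compose DERIV_area_primitive_compose
        DERIV_area_density_compose simp: Complex_eq_of_real_add_i field_simps)

lemmas C_diag_derivatives =
  diag_derivatives[OF holomorphic_C1 open_U, folded C1'_def]
  diag_derivatives[OF holomorphic_C2 open_U, folded C2'_def]
  diag_derivatives[OF holomorphic_C1' open_U, folded C1''_def]
  diag_derivatives[OF holomorphic_C2' open_U, folded C2''_def]

lemma pd1_Qm:
  assumes q: "q \<in> Dom"
  shows "pd1 (Qm C) q = (diag (avg C1') q, diag (avg C2') q, diag F_s q)"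
proof -
  have "pd1 (Qm C) q = pd1 (\<lambda>q. (diag (avg C1) q, diag (avg C2) q, diag F_zw q)) q"
    by (rule pd1_cong_open[OF open_Dom q]) (simp add: Qm_eq_diag)
  also have "\<dots> = (diag (avg C1') q, diag (avg C2') q, diag F_s q)"
    by (intro pd1_diag3 F_zw_derivatives q C_diag_derivatives Dom_z_zbar[OF q])
  finally show ?thesis .
qed

lemma pd2_Qm:
  assumes q: "q \<in> Dom"
  shows "pd2 (Qm C) q = (diag (iskew C1') q, diag (iskew C2') q, diag F_t q)"
proof -
  have "pd2 (Qm C) q = pd2 (\<lambda>q. (diag (avg C1) q, diag (avg C2) q, diag F_zw q)) q"
    by (rule pd2_cong_open[OF open_Dom q]) (simp add: Qm_eq_diag)
  also have "\<dots> = (diag (iskew C1') q, diag (iskew C2') q, diag F_t q)"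
    by (intro pd2_diag3 F_zw_derivatives q C_diag_derivatives Dom_z_zbar[OF q])
  finally show ?thesis .
qed

lemma pd11_Qm:
  assumes q: "q \<in> Dom"
  shows "pd1 (pd1 (Qm C)) q = (diag (avg C1'') q, diag (avg C2'') q, diag F_ss q)"
proof -
  have "pd1 (pd1 (Qm C)) q = pd1 (\<lambda>q. (diag (avg C1') q, diag (avg C2') q, diag F_s q)) q"
    by (rule pd1_cong_open[OF open_Dom q]) (simp add: pd1_Qm)
  also have "\<dots> = (diag (avg C1'') q, diag (avg C2'') q, diag F_ss q)"
    by (intro pd1_diag3 F_zw_derivatives q C_diag_derivatives Dom_z_zbar[OF q])
  finally show ?thesis .
qed

lemma pd22_Qm:
  assumes q: "q \<in> Dom"
  shows "pd2 (pd2 (Qm C)) q =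
    (diag (\<lambda>z w. - avg C1'' z w) q, diag (\<lambda>z w. - avg C2'' z w) q, diag F_tt q)"
proof -
  have "pd2 (pd2 (Qm C)) q = pd2 (\<lambda>q. (diag (iskew C1') q, diag (iskew C2') q, diag F_t q)) q"
    by (rule pd2_cong_open[OF open_Dom q]) (simp add: pd2_Qm)
  also have "\<dots> = (diag (\<lambda>z w. - avg C1'' z w) q, diag (\<lambda>z w. - avg C2'' z w) q, diag F_tt q)"
    by (intro pd2_diag3 F_zw_derivatives q C_diag_derivatives Dom_z_zbar[OF q])
  finally show ?thesis .
qed

lemma pd21_Qm:
  assumes q: "q \<in> Dom"
  shows "pd2 (pd1 (Qm C)) q = (diag (iskew C1'') q, diag (iskew C2'') q, diag F_st q)"
proof -
  have "pd2 (pd1 (Qm C)) q = pd2 (\<lambda>q. (diag (avg C1') q, diag (avg C2') q, diag F_s q)) q"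
    by (rule pd2_cong_open[OF open_Dom q]) (simp add: pd1_Qm)
  also have "\<dots> = (diag (iskew C1'') q, diag (iskew C2'') q, diag F_st q)"
    by (intro pd2_diag3 F_zw_derivatives q C_diag_derivatives Dom_z_zbar[OF q])
  finally show ?thesis .
qed

lemma isothermal_Qm:
  assumes q: "q \<in> Dom"
  shows "det3 (pd1 (Qm C) q) (pd2 (Qm C) q) (pd1 (pd1 (Qm C)) q)
           = det3 (pd1 (Qm C) q) (pd2 (Qm C) q) (pd2 (pd2 (Qm C)) q)"
    and "det3 (pd1 (Qm C) q) (pd2 (Qm C) q) (pd2 (pd1 (Qm C)) q) = 0"
  unfolding pd1_Qm[OF q] pd2_Qm[OF q] pd11_Qm[OF q] pd22_Qm[OF q] pd21_Qm[OF q]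
    diag_def avg_def iskew_def F_s_def F_t_def F_ss_def F_tt_def F_st_def
  by (rule isothermal_algebra; simp add: area_density_def area_density'_def)+

lemma differentiable_Qm:
  assumes q: "q \<in> Dom"
  shows "Qm C differentiable (at q)" "pd1 (Qm C) differentiable (at q)"
    "pd2 (Qm C) differentiable (at q)"
proof -
  note zU = Dom_z_zbar[OF q]
  have d: "(\<lambda>q. (diag (avg C1) q, diag (avg C2) q, diag F_zw q)) differentiable (at q)"
    "(\<lambda>q. (diag (avg C1') q, diag (avg C2') q, diag F_s q)) differentiable (at q)"
    "(\<lambda>q. (diag (iskew C1') q, diag (iskew C2') q, diag F_t q)) differentiable (at q)"
    unfolding diag_def avg_def iskew_def F_zw_def F_s_def F_t_def area_density_def
    by (intro derivative_intros differentiable_holomorphic_z_of[OF _ open_U zU(1)]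
        differentiable_holomorphic_zbar_of[OF _ open_U zU(2)]
        holomorphic_components holomorphic_area_primitive; simp)+
  show "Qm C differentiable (at q)"
    by (rule differentiable_cong_open[OF open_Dom q _ d(1)]) (rule Qm_eq_diag)
  show "pd1 (Qm C) differentiable (at q)"
    by (rule differentiable_cong_open[OF open_Dom q _ d(2)]) (rule pd1_Qm)
  show "pd2 (Qm C) differentiable (at q)"
    by (rule differentiable_cong_open[OF open_Dom q _ d(3)]) (rule pd2_Qm)
qed

lemma Dom_cnj:
  assumes q: "q \<in> Dom"
  shows "z_of q \<in> Usym" "C1 (zbar_of q) = cnj (C1 (z_of q))" "C2 (zbar_of q) = cnj (C2 (z_of q))"
    "C1' (zbar_of q) = cnj (C1' (z_of q))" "C2' (zbar_of q) = cnj (C2' (z_of q))"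
proof -
  have zbar: "zbar_of q = cnj (z_of q)" by (simp add: complex_eq_iff)
  then show z: "z_of q \<in> Usym" using Dom_z_zbar[OF q] by (simp add: mem_Usym_iff)
  show "C1 (zbar_of q) = cnj (C1 (z_of q))" "C2 (zbar_of q) = cnj (C2 (z_of q))"
    using C1_cnj C2_cnj z unfolding zbar by (simp_all add: mem_Usym_iff)
  show "C1' (zbar_of q) = cnj (C1' (z_of q))" "C2' (zbar_of q) = cnj (C2' (z_of q))"
    using C1'_cnj C2'_cnj z unfolding zbar by simp_all
qed

lemma Pm_Fm_real:
  assumes q: "q \<in> Dom"
  shows "Im (fst (Pm C q)) = 0" "Im (snd (Pm C q)) = 0" "Im (Fm C q) = 0"
proof -
  show "Im (fst (Pm C q)) = 0" "Im (snd (Pm C q)) = 0"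
    by (simp_all add: Pm_eq_diag diag_def avg_def Dom_cnj[OF q])
  have "cnj (z_of q) = zbar_of q" by (simp add: complex_eq_iff)
  then have "Re (area_primitive (z_of q) - area_primitive (zbar_of q)) = 0"
    using area_primitive_cnj[OF Dom_cnj(1)[OF q]] by simp
  then show "Im (Fm C q) = 0"
    by (simp add: Fm_eq_F_zw[OF q] diag_def F_zw_def Dom_cnj[OF q] algebra_simps)
qed

lemma pd_Pm:
  assumes q: "q \<in> Dom"
  shows "pd1 (Pm C) q = (diag (avg C1') q, diag (avg C2') q)"
    and "pd2 (Pm C) q = (diag (iskew C1') q, diag (iskew C2') q)"
  unfolding Pm_eq_diag
  by (intro pd1_diag2 pd2_diag2 C_diag_derivatives Dom_z_zbar[OF q])+

lemma Omega_eq_det2_vderiv: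
  assumes q: "q \<in> Dom"
  shows "Omega C q = \<i>/4 * det2 (vderiv C (z_of q)) (vderiv C (zbar_of q))"
  by (simp add: Omega_def pd_Pm[OF q] vderiv_C diag_def avg_def iskew_def det2_def field_simps)

lemma cpd_pc:
  assumes "s + \<tau> \<in> U" "s - \<tau> \<in> U"
  shows "cpd1 (pc C) s \<tau> = ((C1' (s+\<tau>) + C1' (s-\<tau>))/2, (C2' (s+\<tau>) + C2' (s-\<tau>))/2)"
    and "cpd2 (pc C) s \<tau> = ((C1' (s+\<tau>) - C1' (s-\<tau>))/2, (C2' (s+\<tau>) - C2' (s-\<tau>))/2)"
proof -
  have pc: "fst (pc C u v) = (C1 (u+v) + C1 (u-v))/2" "snd (pc C u v) = (C2 (u+v) + C2 (u-v))/2" for u v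
    by (simp_all add: pc_def C1_def C2_def scaleR_prod_def scaleR_conv_of_real algebra_simps)
  have "((\<lambda>u. fst (pc C u \<tau>)) has_field_derivative (C1' (s+\<tau>) + C1' (s-\<tau>))/2) (at s)"
    "((\<lambda>u. snd (pc C u \<tau>)) has_field_derivative (C2' (s+\<tau>) + C2' (s-\<tau>))/2) (at s)"
    "((\<lambda>v. fst (pc C s v)) has_field_derivative (C1' (s+\<tau>) - C1' (s-\<tau>))/2) (at \<tau>)"
    "((\<lambda>v. snd (pc C s v)) has_field_derivative (C2' (s+\<tau>) - C2' (s-\<tau>))/2) (at \<tau>)"
    unfolding pc using assms
    by (auto intro!: derivative_eq_intros DERIV_C_compose simp: field_simps)
  then show "cpd1 (pc C) s \<tau> = ((C1' (s+\<tau>) + C1' (s-\<tau>))/2, (C2' (s+\<tau>) + C2' (s-\<tau>))/2)"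
    and "cpd2 (pc C) s \<tau> = ((C1' (s+\<tau>) - C1' (s-\<tau>))/2, (C2' (s+\<tau>) - C2' (s-\<tau>))/2)"
    unfolding cpd1_def cpd2_def by (simp_all add: DERIV_imp_deriv)
qed

lemma Omega_eq_omegac:
  assumes q: "q \<in> Dom"
  shows "Omega C q = - \<i> * omegac C (of_real (fst q)) (\<i> * of_real (snd q))"
  using Dom_z_zbar[OF q]
  by (simp add: Omega_eq_det2_vderiv[OF q] omegac_def cpd_pc Complex_eq_of_real_add_i vderiv_C
      det2_def field_simps)

lemma cpd_Pzw:
  shows "z \<in> U \<Longrightarrow> cpd1 (Pzw C) z w = (C1' z / 2, C2' z / 2)"
    and "w \<in> U \<Longrightarrow> cpd2 (Pzw C) z w = (C1' w / 2, C2' w / 2)"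
proof -
  have Pzw: "fst (Pzw C u v) = (C1 u + C1 v)/2" "snd (Pzw C u v) = (C2 u + C2 v)/2" for u v
    by (simp_all add: Pzw_def C1_def C2_def scaleR_prod_def scaleR_conv_of_real algebra_simps)
  have "((\<lambda>u. fst (Pzw C u w)) has_field_derivative C1' z / 2) (at z)"
    "((\<lambda>u. snd (Pzw C u w)) has_field_derivative C2' z / 2) (at z)" if "z \<in> U"
    unfolding Pzw using that by (auto intro!: derivative_eq_intros DERIV_C_compose)
  then show "z \<in> U \<Longrightarrow> cpd1 (Pzw C) z w = (C1' z / 2, C2' z / 2)"
    unfolding cpd1_def by (simp add: DERIV_imp_deriv)
  have "((\<lambda>v. fst (Pzw C z v)) has_field_derivative C1' w / 2) (at w)"
    "((\<lambda>v. snd (Pzw C z v)) has_field_derivative C2' w / 2) (at w)" if "w \<in> U"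
    unfolding Pzw using that by (auto intro!: derivative_eq_intros DERIV_C_compose)
  then show "w \<in> U \<Longrightarrow> cpd2 (Pzw C) z w = (C1' w / 2, C2' w / 2)"
    unfolding cpd2_def by (simp add: DERIV_imp_deriv)
qed

lemma cpd_cpd_Pzw:
  shows "z \<in> U \<Longrightarrow> cpd1 (cpd1 (Pzw C)) z w = (C1'' z / 2, C2'' z / 2)"
    and "w \<in> U \<Longrightarrow> cpd2 (cpd2 (Pzw C)) z w = (C1'' w / 2, C2'' w / 2)"
proof -
  assume z: "z \<in> U"
  have "eventually (\<lambda>u. u \<in> U) (nhds z)" using eventually_nhds_in_open[OF open_U z] .
  then have "deriv (\<lambda>u. fst (cpd1 (Pzw C) u w)) z = deriv (\<lambda>u. C1' u / 2) z"
    "deriv (\<lambda>u. snd (cpd1 (Pzw C) u w)) z = deriv (\<lambda>u. C2' u / 2) z"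
    by (auto intro!: deriv_cong_ev elim!: eventually_mono simp: cpd_Pzw)
  moreover have "((\<lambda>u. C1' u / 2) has_field_derivative C1'' z / 2) (at z)"
    "((\<lambda>u. C2' u / 2) has_field_derivative C2'' z / 2) (at z)"
    using z by (auto intro!: derivative_eq_intros DERIV_C_compose)
  ultimately show "cpd1 (cpd1 (Pzw C)) z w = (C1'' z / 2, C2'' z / 2)"
    unfolding cpd1_def[of "cpd1 (Pzw C)"] by (simp add: DERIV_imp_deriv)
next
  assume w: "w \<in> U"
  have "eventually (\<lambda>u. u \<in> U) (nhds w)" using eventually_nhds_in_open[OF open_U w] .
  then have "deriv (\<lambda>u. fst (cpd2 (Pzw C) z u)) w = deriv (\<lambda>u. C1' u / 2) w"
    "deriv (\<lambda>u. snd (cpd2 (Pzw C) z u)) w = deriv (\<lambda>u. C2' u / 2) w"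
    by (auto intro!: deriv_cong_ev elim!: eventually_mono simp: cpd_Pzw)
  moreover have "((\<lambda>u. C1' u / 2) has_field_derivative C1'' w / 2) (at w)"
    "((\<lambda>u. C2' u / 2) has_field_derivative C2'' w / 2) (at w)"
    using w by (auto intro!: derivative_eq_intros DERIV_C_compose)
  ultimately show "cpd2 (cpd2 (Pzw C)) z w = (C1'' w / 2, C2'' w / 2)"
    unfolding cpd2_def[of "cpd2 (Pzw C)"] by (simp add: DERIV_imp_deriv)
qed

lemma Astr_eq:
  "z_of q \<in> U \<Longrightarrow> Astr C q = \<i> / 4 * det2 (vderiv C (z_of q)) (vderiv (vderiv C) (z_of q))"
  by (simp add: Astr_def Let_def complex_cnj cpd_Pzw cpd_cpd_Pzw vderiv_C vderiv_vderiv_C det2_def field_simps)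

lemma Bstr_eq:
  "zbar_of q \<in> U \<Longrightarrow>
     Bstr C q = - \<i> / 4 * det2 (vderiv C (zbar_of q)) (vderiv (vderiv C) (zbar_of q))"
  by (simp add: Bstr_def Let_def complex_cnj cpd_Pzw cpd_cpd_Pzw vderiv_C vderiv_vderiv_C det2_def field_simps)

section \<open>The surface is locally a graph with \<open>det D\<^sup>2 u = 1\<close>\<close>

definition "Phi q = (Re (fst (Pm C q)), Re (snd (Pm C q)))"

definition "Phi_jacobian q = mat2 (Re (C1' (z_of q))) (- Im (C1' (z_of q)))
                                  (Re (C2' (z_of q))) (- Im (C2' (z_of q)))"

text \<open>The gradient of the graph function \<open>u\<close> at \<open>Phi q\<close>.\<close>

definition "gradient1 q = Im (C2 (z_of q))"
definition "gradient2 q = - Im (C1 (z_of q))"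

lemma Phi_eq_Re_C: "q \<in> Dom \<Longrightarrow> Phi q = (Re (C1 (z_of q)), Re (C2 (z_of q)))"
  by (simp add: Phi_def Pm_eq_diag diag_def avg_def Dom_cnj)

lemma Phi_has_derivative:
  assumes q: "q \<in> Dom"
  shows "(Phi has_derivative blinfun_apply (Phi_jacobian q)) (at q)"
proof -
  have "((\<lambda>q. (Re (C1 (z_of q)), Re (C2 (z_of q)))) has_derivative
        (\<lambda>d. (Re (C1' (z_of q) * z_of d), Re (C2' (z_of q) * z_of d)))) (at q)"
    by (intro has_derivative_Pair has_derivative_Re has_derivative_z_of_compose DERIV_C1 DERIV_C2
        Dom_z_zbar[OF q])
  moreover have "(\<lambda>d. (Re (C1' (z_of q) * z_of d), Re (C2' (z_of q) * z_of d)))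
      = blinfun_apply (Phi_jacobian q)"
    by (rule ext) (simp add: Phi_jacobian_def mat2_apply)
  ultimately show ?thesis
    by (auto intro: has_derivative_transform_within_open[OF _ open_Dom q] simp: Phi_eq_Re_C)
qed

lemma continuous_on_Phi_jacobian: "continuous_on Dom Phi_jacobian"
proof -
  have "z_of ` Dom \<subseteq> U" by (auto simp: Dom_def)
  then have cont: "continuous_on Dom (\<lambda>q. h (z_of q))" if "h holomorphic_on U" for h
    using continuous_on_compose2[OF holomorphic_on_imp_continuous_on[OF that]
        linear_continuous_on[OF bounded_linear_z_of]] by blast
  then show ?thesis
    unfolding Phi_jacobian_def
    by (intro continuous_on_mat2 continuous_intros cont holomorphic_components)
qed

lemma Re_Fm_has_derivative:
  assumes q: "q \<in> Dom"
  shows "((\<lambda>q. Re (Fm C q)) has_derivative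
      (\<lambda>d. gradient1 q * fst (Phi_jacobian q d) + gradient2 q * snd (Phi_jacobian q d))) (at q)"
proof -
  let ?z = "z_of q" and ?w = "zbar_of q"
  note zw = Dom_z_zbar[OF q]
  have dF: "((\<lambda>q. diag F_zw q) has_derivative
      (\<lambda>d. \<i>/4 * (area_density ?z * z_of d - area_density ?w * zbar_of d
        + (C1 ?z * (C2' ?w * zbar_of d) + C1' ?z * z_of d * C2 ?w)
        - (C2 ?z * (C1' ?w * zbar_of d) + C2' ?z * z_of d * C1 ?w)))) (at q)"
    unfolding diag_def F_zw_def
    by (intro has_derivative_mult_right has_derivative_add has_derivative_diff has_derivative_mult
        has_derivative_z_of_compose has_derivative_zbar_of_compose DERIV_area_primitive
        DERIV_C1 DERIV_C2 zw)
  have eq: "(\<lambda>d. Re (\<i>/4 * (area_density ?z * z_of d - area_density ?w * zbar_of d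
        + (C1 ?z * (C2' ?w * zbar_of d) + C1' ?z * z_of d * C2 ?w)
        - (C2 ?z * (C1' ?w * zbar_of d) + C2' ?z * z_of d * C1 ?w))))
      = (\<lambda>d. gradient1 q * fst (Phi_jacobian q d) + gradient2 q * snd (Phi_jacobian q d))"
  proof
    fix d :: "real \<times> real"
    show "Re (\<i>/4 * (area_density ?z * z_of d - area_density ?w * zbar_of d
        + (C1 ?z * (C2' ?w * zbar_of d) + C1' ?z * z_of d * C2 ?w)
        - (C2 ?z * (C1' ?w * zbar_of d) + C2' ?z * z_of d * C1 ?w)))
      = gradient1 q * fst (Phi_jacobian q d) + gradient2 q * snd (Phi_jacobian q d)"
      by (simp add: area_density_def Dom_cnj[OF q] gradient1_def gradient2_def
          Phi_jacobian_def mat2_apply field_simps) (simp add: algebra_simps)?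
  qed
  from has_derivative_Re[OF dF]
  have "((\<lambda>q. Re (diag F_zw q)) has_derivative
      (\<lambda>d. gradient1 q * fst (Phi_jacobian q d) + gradient2 q * snd (Phi_jacobian q d))) (at q)"
    unfolding eq .
  then show ?thesis
    by (rule has_derivative_transform_within_open[OF _ open_Dom q]) (simp add: Fm_eq_F_zw)
qed

lemma gradient_has_derivative:
  assumes q: "q \<in> Dom"
  shows "(gradient1 has_derivative (\<lambda>d. Im (C2' (z_of q) * z_of d))) (at q)"
    and "(gradient2 has_derivative (\<lambda>d. - Im (C1' (z_of q) * z_of d))) (at q)"
  unfolding gradient1_def[abs_def] gradient2_def[abs_def]
  by (intro has_derivative_minus has_derivative_Im has_derivative_z_of_compose DERIV_C1 DERIV_C2
      Dom_z_zbar[OF q])+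

lemma Omega_eq_det_Phi_jacobian:
  assumes q: "q \<in> Dom"
  shows "Omega C q = - of_real (Re (C1' (z_of q)) * - Im (C2' (z_of q))
                                - - Im (C1' (z_of q)) * Re (C2' (z_of q))) / 2"
  by (simp add: Omega_eq_det2_vderiv[OF q] vderiv_C Dom_cnj[OF q] det2_def complex_eq_iff
      field_simps) (simp add: algebra_simps)?

lemma gradient_inverse_det_one:
  assumes g: "(g has_derivative g') (at x)" and gx: "g x \<in> Dom"
    and inv: "\<And>d. Phi_jacobian (g x) (g' d) = d"
  shows "pd1 (\<lambda>y. gradient1 (g y)) x * pd2 (\<lambda>y. gradient2 (g y)) x
       - pd1 (\<lambda>y. gradient2 (g y)) x * pd2 (\<lambda>y. gradient1 (g y)) x = 1"
proof -
  let ?\<alpha> = "C1' (z_of (g x))" and ?\<beta> = "C2' (z_of (g x))"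
  have h1: "((\<lambda>y. gradient1 (g y)) has_derivative (\<lambda>d. Im (?\<beta> * z_of (g' d)))) (at x)"
    and h2: "((\<lambda>y. gradient2 (g y)) has_derivative (\<lambda>d. - Im (?\<alpha> * z_of (g' d)))) (at x)"
    using has_derivative_compose[OF g gradient_has_derivative(1)[OF gx]]
      has_derivative_compose[OF g gradient_has_derivative(2)[OF gx]] by simp_all
  obtain x1 y1 x2 y2 where v: "g' (1,0) = (x1, y1)" "g' (0,1) = (x2, y2)" by fastforce
  have "Re ?\<alpha> * x1 - Im ?\<alpha> * y1 = 1" "Re ?\<beta> * x1 - Im ?\<beta> * y1 = 0"
    "Re ?\<alpha> * x2 - Im ?\<alpha> * y2 = 0" "Re ?\<beta> * x2 - Im ?\<beta> * y2 = 1"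
    using inv[of "(1,0)"] inv[of "(0,1)"] v by (simp_all add: Phi_jacobian_def mat2_apply)
  from cauchy_riemann_det_one[OF this] show ?thesis
    unfolding pd_has_derivative[OF h1] pd_has_derivative[OF h2] v by (simp add: algebra_simps)
qed

lemma Phi_local_inverse:
  assumes p0: "p0 \<in> Dom" and \<Omega>: "Omega C p0 \<noteq> 0"
  obtains W V g g' where "open W" "W \<subseteq> Dom" "p0 \<in> W" "open V" "homeomorphism W V Phi g"
    "\<And>y. y \<in> V \<Longrightarrow> (g has_derivative g' y) (at y)"
    "\<And>y d. y \<in> V \<Longrightarrow> Phi_jacobian (g y) (g' y d) = d"
proof -
  define a0 b0 c0 d0 where "a0 = Re (C1' (z_of p0))" "b0 = - Im (C1' (z_of p0))"
    "c0 = Re (C2' (z_of p0))" "d0 = - Im (C2' (z_of p0))"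
  have "Omega C p0 = - of_real (a0 * d0 - b0 * c0) / 2"
    unfolding a0_b0_c0_d0_def by (rule Omega_eq_det_Phi_jacobian[OF p0])
  with \<Omega> have "a0 * d0 - b0 * c0 \<noteq> 0" by (metis div_0 minus_zero of_real_0)
  moreover have "Phi_jacobian p0 = mat2 a0 b0 c0 d0" by (simp add: Phi_jacobian_def a0_b0_c0_d0_def)
  ultimately obtain W V g g'
    where W: "open W" "W \<subseteq> Dom" "p0 \<in> W" and V: "open V"
      and hom: "homeomorphism W V Phi g"
      and g: "\<And>y. y \<in> V \<Longrightarrow> (g has_derivative (g' y)) (at y)"
      and g': "\<And>y. y \<in> V \<Longrightarrow> g' y = inv (Phi_jacobian (g y))"
      and bij: "\<And>y. y \<in> V \<Longrightarrow> bij (Phi_jacobian (g y))"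
    using inverse_function_theorem[OF open_Dom Phi_has_derivative continuous_on_Phi_jacobian p0]
      mat2_inverse by metis
  have inv: "Phi_jacobian (g y) (g' y d) = d" if "y \<in> V" for y d
    using g'[OF that] bij_is_surj[OF bij[OF that]] by (simp add: surj_f_inv_f)
  show ?thesis using that W V hom g inv by blast
qed

lemma definite_graph:
  assumes p0: "p0 \<in> Dom" and \<Omega>: "Omega C p0 \<noteq> 0"
  shows "definite_graph_at C p0"
proof -
  obtain W V g g' where W: "open W" "W \<subseteq> Dom" "p0 \<in> W" and V: "open V"
    and hom: "homeomorphism W V Phi g" and g: "\<And>y. y \<in> V \<Longrightarrow> (g has_derivative g' y) (at y)"
    and inv: "\<And>y d. y \<in> V \<Longrightarrow> Phi_jacobian (g y) (g' y d) = d"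
    using Phi_local_inverse[OF p0 \<Omega>] by blast
  have hom': "Phi ` W = V" "g ` V = W" "\<And>x. x \<in> W \<Longrightarrow> g (Phi x) = x"
    "\<And>y. y \<in> V \<Longrightarrow> Phi (g y) = y"
    using hom unfolding homeomorphism_def by auto
  have gDom: "y \<in> V \<Longrightarrow> g y \<in> Dom" for y using hom'(2) W(2) by auto
  define u where "u x = Re (Fm C (g x))" for x
  have u: "(u has_derivative (\<lambda>d. gradient1 (g y) * fst d + gradient2 (g y) * snd d)) (at y)"
    if y: "y \<in> V" for y
    using has_derivative_compose[OF g[OF y] Re_Fm_has_derivative[OF gDom[OF y]]]
    unfolding u_def inv[OF y] by simp
  have pd_u: "pd1 u y = gradient1 (g y)" "pd2 u y = gradient2 (g y)" if "y \<in> V" for y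
    using pd_has_derivative[OF u[OF that]] by simp_all
  have Phi_eq: "(\<lambda>q. (Re (fst (Pm C q)), Re (snd (Pm C q)))) = Phi"
    by (simp add: fun_eq_iff Phi_def)
  show ?thesis
    unfolding definite_graph_at_def Phi_eq
  proof (rule exI[of _ W], rule exI[of _ V], rule exI[of _ u], intro conjI ballI)
    show "bij_betw Phi W V" by (rule bij_betw_byWitness[of W g]) (use hom' in auto)
  next
    fix q assume q: "q \<in> W"
    then have "Im (Fm C q) = 0" using Pm_Fm_real W(2) by blast
    then show "Fm C q = of_real (u (Re (fst (Pm C q)), Re (snd (Pm C q))))"
      using hom'(3)[OF q] by (simp add: u_def Phi_def complex_eq_iff)
  next
    fix x assume x: "x \<in> V"
    have e: "pd1 (pd1 u) x = pd1 (\<lambda>y. gradient1 (g y)) x" "pd2 (pd2 u) x = pd2 (\<lambda>y. gradient2 (g y)) x"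
      "pd1 (pd2 u) x = pd1 (\<lambda>y. gradient2 (g y)) x" "pd2 (pd1 u) x = pd2 (\<lambda>y. gradient1 (g y)) x"
      by (intro pd1_cong_open[OF V x] pd2_cong_open[OF V x]; simp add: pd_u)+
    show "pd1 (pd1 u) x * pd2 (pd2 u) x - pd1 (pd2 u) x * pd2 (pd1 u) x = 1"
      unfolding e by (rule gradient_inverse_det_one[OF g[OF x] gDom[OF x] inv[OF x]])
    show "u differentiable (at x)" using u[OF x] by (auto simp: differentiable_def)
    have "(\<lambda>y. gradient1 (g y)) differentiable (at x)" "(\<lambda>y. gradient2 (g y)) differentiable (at x)"
      using has_derivative_compose[OF g[OF x] gradient_has_derivative(1)[OF gDom[OF x]]]
        has_derivative_compose[OF g[OF x] gradient_has_derivative(2)[OF gDom[OF x]]]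
      by (auto simp: differentiable_def)
    then show "pd1 u differentiable (at x)" "pd2 u differentiable (at x)"
      by (auto intro: differentiable_cong_open[OF V x] simp: pd_u)
  qed (use W V hom' p0 in auto)
qed

section \<open>Independence of the parameterization\<close>

lemma reparametrization:
  fixes \<psi> :: "complex \<Rightarrow> complex"
  assumes V: "open V" "convex V" "a' < b'" "of_real ` {a'<..<b'} \<subseteq> V"
    and \<psi>: "\<psi> holomorphic_on V" "\<psi> ` V \<subseteq> U" "\<And>r. r \<in> {a'<..<b'} \<Longrightarrow> Im (\<psi> (of_real r)) = 0"
    and z: "Complex s t \<in> V" "Complex s (-t) \<in> V"
  defines "q \<equiv> (Re (\<psi> (Complex s t)), Im (\<psi> (Complex s t)))"
  shows "Fm (C \<circ> \<psi>) (s, t) = Fm C q" "Pm (C \<circ> \<psi>) (s, t) = Pm C q" "Qm (C \<circ> \<psi>) (s, t) = Qm C q"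
proof -
  have "\<psi> (Complex s (-t)) = cnj (\<psi> (Complex s t))"
    using holomorphic_reflection[OF V \<psi>(1,3) z(1)] z(2) by (simp add: complex_cnj)
  then have zq: "z_of q = \<psi> (Complex s t)" and zbarq: "zbar_of q = \<psi> (Complex s (-t))"
    by (simp_all add: q_def complex_eq_iff)
  have q: "q \<in> Dom" using \<psi>(2) z by (auto simp: Dom_def zq zbarq)
  show P: "Pm (C \<circ> \<psi>) (s, t) = Pm C q"
    by (simp add: Pm_def zq zbarq)
  have "((area_primitive \<circ> \<psi>) has_field_derivative det2 ((C \<circ> \<psi>) w) (vderiv (C \<circ> \<psi>) w)) (at w)"
    if w: "w \<in> V" for w
  proof -
    have d\<psi>: "(\<psi> has_field_derivative deriv \<psi> w) (at w)" and \<psi>w: "\<psi> w \<in> U"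
      using holomorphic_derivI[OF \<psi>(1) V(1) w] \<psi>(2) w by auto
    have "((\<lambda>u. C1 (\<psi> u)) has_field_derivative C1' (\<psi> w) * deriv \<psi> w) (at w)"
      "((\<lambda>u. C2 (\<psi> u)) has_field_derivative C2' (\<psi> w) * deriv \<psi> w) (at w)"
      "((\<lambda>u. area_primitive (\<psi> u)) has_field_derivative area_density (\<psi> w) * deriv \<psi> w) (at w)"
      by (rule DERIV_C_compose(1)[OF d\<psi> \<psi>w refl] DERIV_C_compose(2)[OF d\<psi> \<psi>w refl]
          DERIV_area_primitive_compose[OF d\<psi> \<psi>w refl])+
    then show ?thesis
      by (simp add: o_def DERIV_imp_deriv vderiv_def area_density_def det2_def C1_def[abs_def]
          C2_def[abs_def] algebra_simps)
  qed
  moreover have "(\<lambda>z. fst ((C \<circ> \<psi>) z)) holomorphic_on V" "(\<lambda>z. snd ((C \<circ> \<psi>) z)) holomorphic_on V"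
    using holomorphic_on_compose_gen[OF \<psi>(1) holomorphic_C1 \<psi>(2)]
      holomorphic_on_compose_gen[OF \<psi>(1) holomorphic_C2 \<psi>(2)]
    by (simp_all add: C1_def C2_def o_def)
  ultimately have "fc (C \<circ> \<psi>) (of_real s) (\<i> * of_real t) = 1/4 * (area_primitive (z_of q)
      - area_primitive (zbar_of q) + det2 (C (z_of q)) (C (zbar_of q)))"
    using fc_eq_primitive[OF V(2,1), of "C \<circ> \<psi>" "area_primitive \<circ> \<psi>"] z
    by (simp add: Complex_eq_of_real_add_i zq zbarq)
  then have "Fm (C \<circ> \<psi>) (s, t) = diag F_zw q"
    by (simp add: Fm_def diag_def F_zw_def det2_def C1_def C2_def)
  then show F: "Fm (C \<circ> \<psi>) (s, t) = Fm C q"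
    by (simp add: Fm_eq_F_zw[OF q])
  show "Qm (C \<circ> \<psi>) (s, t) = Qm C q"
    using P F by (simp add: Qm_def)
qed

section \<open>Nonvanishing of the Pick invariant\<close>

definition "curvature z = C1' z * C2'' z - C2' z * C1'' z"

lemma det2_vderiv_eq_curvature: "det2 (vderiv C z) (vderiv (vderiv C) z) = curvature z"
  by (simp add: det2_def vderiv_C vderiv_vderiv_C curvature_def)

lemma holomorphic_curvature: "curvature holomorphic_on U"
  unfolding curvature_def[abs_def] by (intro holomorphic_intros holomorphic_components)

lemma Omega_eq_divided_difference:
  assumes q: "q \<in> Dom" and t: "snd q \<noteq> 0"
  shows "Omega C q = \<i>/4 * (z_of q - zbar_of q) *
    det2 (divided_difference C1' q, divided_difference C2' q) (C1' (zbar_of q), C2' (zbar_of q))"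
proof -
  have nz: "z_of q - zbar_of q \<noteq> 0" using t by (simp add: complex_eq_iff)
  have "Omega C q = \<i>/4 * det2 (C1' (z_of q), C2' (z_of q)) (C1' (zbar_of q), C2' (zbar_of q))"
    by (simp add: Omega_eq_det2_vderiv[OF q] vderiv_C)
  also have "\<dots> = \<i>/4 * (z_of q - zbar_of q) *
    det2 (divided_difference C1' q, divided_difference C2' q) (C1' (zbar_of q), C2' (zbar_of q))"
    by (subst det2_eq_mult_divided[OF nz]) (simp add: divided_difference_def)
  finally show ?thesis .
qed

lemma tendsto_z_of_zbar_of:
  assumes h: "h holomorphic_on U" and x0: "of_real s0 \<in> U"
  shows "((\<lambda>q. h (z_of q)) \<longlongrightarrow> h (of_real s0)) (at (s0, 0) within T)"
    and "((\<lambda>q. h (zbar_of q)) \<longlongrightarrow> h (of_real s0)) (at (s0, 0) within T)"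
proof -
  have z0: "z_of (s0, 0) = of_real s0" "zbar_of (s0, 0) = of_real s0" by (simp_all add: complex_eq_iff)
  have "continuous (at (s0, 0) within T) (\<lambda>q. h (z_of q))"
    "continuous (at (s0, 0) within T) (\<lambda>q. h (zbar_of q))"
    using differentiable_holomorphic_z_of[OF h open_U, of "(s0, 0)"]
      differentiable_holomorphic_zbar_of[OF h open_U, of "(s0, 0)"] x0 z0
    by (simp_all add: differentiable_imp_continuous_within differentiable_at_withinI)
  then show "((\<lambda>q. h (z_of q)) \<longlongrightarrow> h (of_real s0)) (at (s0, 0) within T)"
    "((\<lambda>q. h (zbar_of q)) \<longlongrightarrow> h (of_real s0)) (at (s0, 0) within T)"
    unfolding continuous_within z0 by simp_all
qed

lemma eventually_Pick_factors_nonzero: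
  assumes x0: "of_real s0 \<in> U" and \<kappa>: "curvature (of_real s0) \<noteq> 0"
  shows "eventually (\<lambda>q. q \<in> Dom \<and> curvature (z_of q) \<noteq> 0 \<and> curvature (zbar_of q) \<noteq> 0 \<and>
      det2 (divided_difference C1' q, divided_difference C2' q) (C1' (zbar_of q), C2' (zbar_of q)) \<noteq> 0)
    (at (s0, 0) within {q. snd q > 0})"
proof -
  let ?F = "at (s0, 0) within {q::real \<times> real. snd q > 0}"
  have "Complex s0 0 = of_real s0" "Complex s0 (- 0) = of_real s0" by (simp_all add: complex_eq_iff)
  then have "(s0, 0) \<in> Dom" using x0 by (simp add: Dom_def)
  then have Dom: "eventually (\<lambda>q. q \<in> Dom) ?F"
    using open_Dom by (simp add: eventually_at_filter eventually_mono[OF eventually_nhds_in_open])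
  have curv: "eventually (\<lambda>q. curvature (z_of q) \<noteq> 0) ?F"
    "eventually (\<lambda>q. curvature (zbar_of q) \<noteq> 0) ?F"
    using tendsto_imp_eventually_ne[OF tendsto_z_of_zbar_of(1)[OF holomorphic_curvature x0] \<kappa>]
      tendsto_imp_eventually_ne[OF tendsto_z_of_zbar_of(2)[OF holomorphic_curvature x0] \<kappa>]
    by simp_all
  have "((\<lambda>q. det2 (divided_difference C1' q, divided_difference C2' q)
        (C1' (zbar_of q), C2' (zbar_of q))) \<longlongrightarrow>
      det2 (C1'' (of_real s0), C2'' (of_real s0)) (C1' (of_real s0), C2' (of_real s0))) ?F"
    unfolding det2_def fst_conv snd_conv C1''_def C2''_def
    by (intro tendsto_diff tendsto_mult
        divided_difference_tendsto[OF holomorphic_C1' open_U x0]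
        divided_difference_tendsto[OF holomorphic_C2' open_U x0]
        tendsto_z_of_zbar_of(2)[OF holomorphic_C1' x0] tendsto_z_of_zbar_of(2)[OF holomorphic_C2' x0])
  moreover have "det2 (C1'' (of_real s0), C2'' (of_real s0)) (C1' (of_real s0), C2' (of_real s0)) \<noteq> 0"
    using \<kappa> by (simp add: curvature_def det2_def algebra_simps)
  ultimately have "eventually (\<lambda>q. det2 (divided_difference C1' q, divided_difference C2' q)
        (C1' (zbar_of q), C2' (zbar_of q)) \<noteq> 0) ?F"
    by (rule tendsto_imp_eventually_ne)
  with Dom curv show ?thesis by (intro eventually_conj)
qed

lemma Pick_nonzero_near_axis:
  assumes x0: "of_real s0 \<in> U" and \<kappa>: "curvature (of_real s0) \<noteq> 0"
  shows "\<exists>\<epsilon>>0. \<forall>s t. \<bar>s - s0\<bar> < \<epsilon> \<and> 0 < t \<and> t < \<epsilon> \<longrightarrow>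
           (s, t) \<in> sdom U \<and> Omega C (s, t) \<noteq> 0 \<and> Jpick C (s, t) \<noteq> 0"
proof -
  obtain d where d: "d > 0" and near: "\<And>q. 0 < snd q \<Longrightarrow> dist q (s0, 0) < d \<Longrightarrow>
      q \<in> Dom \<and> curvature (z_of q) \<noteq> 0 \<and> curvature (zbar_of q) \<noteq> 0 \<and>
      det2 (divided_difference C1' q, divided_difference C2' q) (C1' (zbar_of q), C2' (zbar_of q)) \<noteq> 0"
    using eventually_Pick_factors_nonzero[OF x0 \<kappa>] unfolding eventually_at
    by (metis mem_Collect_eq prod.inject snd_conv less_irrefl)
  show ?thesis
  proof (intro exI[of _ "d/2"] conjI allI impI)
    fix s t assume st: "\<bar>s - s0\<bar> < d/2 \<and> 0 < t \<and> t < d/2"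
    have "dist (s, t) (s0, 0) \<le> \<bar>s - s0\<bar> + \<bar>t\<bar>"
      unfolding dist_Pair_Pair dist_real_def using sqrt_sum_squares_le_sum_abs by simp
    with st have q: "(s, t) \<in> Dom" and \<kappa>z: "curvature (Complex s t) \<noteq> 0"
      and \<kappa>w: "curvature (Complex s (- t)) \<noteq> 0"
      and \<Lambda>: "det2 (divided_difference C1' (s, t), divided_difference C2' (s, t))
        (C1' (Complex s (- t)), C2' (Complex s (- t))) \<noteq> 0"
      using near[of "(s, t)"] by auto
    show "(s, t) \<in> sdom U"
      using closed_segment_subset[OF _ _ convex_U] q st by (simp add: sdom_def Dom_def)
    have t: "snd (s, t) \<noteq> 0" and nz: "Complex s t - Complex s (- t) \<noteq> 0"
      using st by (simp_all add: complex_eq_iff)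
    show \<Omega>: "Omega C (s, t) \<noteq> 0"
      unfolding Omega_eq_divided_difference[OF q t] using \<Lambda> nz by simp
    have "Astr C (s, t) \<noteq> 0" "Bstr C (s, t) \<noteq> 0"
      using Dom_z_zbar[OF q] \<kappa>z \<kappa>w
      by (simp_all add: Astr_eq Bstr_eq det2_vderiv_eq_curvature)
    with \<Omega> show "Jpick C (s, t) \<noteq> 0" by (simp add: Jpick_def)
  qed (use d in simp)
qed

end

theorem mainTheorem7:
  fixes C :: "complex \<Rightarrow> complex \<times> complex" and U :: "complex set" and a b :: real
  assumes U_open: "open U" and U_convex: "convex U"
    and ab: "a < b" and I_sub: "of_real ` {a<..<b} \<subseteq> U"
    and hol1: "(\<lambda>z. fst (C z)) holomorphic_on U"
    and hol2: "(\<lambda>z. snd (C z)) holomorphic_on U"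
    and real_on_I: "\<forall>r\<in>{a<..<b}. Im (fst (C (of_real r))) = 0 \<and> Im (snd (C (of_real r))) = 0"
    and regular: "\<forall>r\<in>{a<..<b}. vderiv C (of_real r) \<noteq> 0"
    and convex_arc: "\<forall>r\<in>{a<..<b}. Re (det2 (vderiv C (of_real r)) (vderiv (vderiv C) (of_real r))) \<ge> 0"
  shows
    "(\<forall>st\<in>sdom U.
        Im (fst (Pm C st)) = 0 \<and> Im (snd (Pm C st)) = 0 \<and> Im (Fm C st) = 0 \<and>
        Qm C differentiable (at st) \<and> pd1 (Qm C) differentiable (at st) \<and>
        pd2 (Qm C) differentiable (at st) \<and>
        det3 (pd1 (Qm C) st) (pd2 (Qm C) st) (pd1 (pd1 (Qm C)) st)
          = det3 (pd1 (Qm C) st) (pd2 (Qm C) st) (pd2 (pd2 (Qm C)) st) \<and>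
        det3 (pd1 (Qm C) st) (pd2 (Qm C) st) (pd2 (pd1 (Qm C)) st) = 0 \<and>
        (Omega C st \<noteq> 0 \<longrightarrow> definite_graph_at C st))
   \<and> (\<forall>(\<psi> :: complex \<Rightarrow> complex) V a' b'.
        open V \<and> convex V \<and> a' < b' \<and> of_real ` {a'<..<b'} \<subseteq> V \<and>
        \<psi> holomorphic_on V \<and> \<psi> ` V \<subseteq> U \<and>
        (\<forall>r\<in>{a'<..<b'}. Im (\<psi> (of_real r)) = 0 \<and> Re (deriv \<psi> (of_real r)) > 0)
        \<longrightarrow> (\<forall>s t. (s, t) \<in> sdom V \<and> Im (\<psi> (Complex s t)) > 0 \<longrightarrow>
               Fm (C \<circ> \<psi>) (s, t) = Fm C (Re (\<psi> (Complex s t)), Im (\<psi> (Complex s t))) \<and>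
               Pm (C \<circ> \<psi>) (s, t) = Pm C (Re (\<psi> (Complex s t)), Im (\<psi> (Complex s t))) \<and>
               Qm (C \<circ> \<psi>) (s, t) = Qm C (Re (\<psi> (Complex s t)), Im (\<psi> (Complex s t)))))
   \<and> (\<forall>st\<in>sdom U.
        Omega C st = - \<i> * omegac C (of_real (fst st)) (\<i> * of_real (snd st)) \<and>
        Astr C st = \<i> / 4 * det2 (vderiv C (Complex (fst st) (snd st)))
                                 (vderiv (vderiv C) (Complex (fst st) (snd st))) \<and>
        Bstr C st = - \<i> / 4 * det2 (vderiv C (Complex (fst st) (- snd st)))
                                   (vderiv (vderiv C) (Complex (fst st) (- snd st))))
   \<and> ((\<forall>r\<in>{a<..<b}. Re (det2 (vderiv C (of_real r)) (vderiv (vderiv C) (of_real r))) > 0)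
        \<longrightarrow> (\<forall>s0\<in>{a<..<b}. \<exists>\<epsilon>>0. \<forall>s t. \<bar>s - s0\<bar> < \<epsilon> \<and> 0 < t \<and> t < \<epsilon> \<longrightarrow>
               (s, t) \<in> sdom U \<and> Omega C (s, t) \<noteq> 0 \<and> Jpick C (s, t) \<noteq> 0))"
proof -
  interpret analytic_arc C U a b
    using U_open U_convex ab I_sub hol1 hol2 real_on_I by unfold_locales
  note Dom = sdom_subset_Dom[THEN subsetD]
  show ?thesis
  proof (intro conjI ballI allI impI)
    fix s0 assume "\<forall>r\<in>{a<..<b}. 0 < Re (det2 (vderiv C (of_real r)) (vderiv (vderiv C) (of_real r)))"
      and "s0 \<in> {a<..<b}"
    then show "\<exists>\<epsilon>>0. \<forall>s t. \<bar>s - s0\<bar> < \<epsilon> \<and> 0 < t \<and> t < \<epsilon> \<longrightarrow>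
        (s, t) \<in> sdom U \<and> Omega C (s, t) \<noteq> 0 \<and> Jpick C (s, t) \<noteq> 0"
      using interval_in_U
      by (intro Pick_nonzero_near_axis) (force simp: det2_vderiv_eq_curvature)+
  qed (auto dest: Dom sdom_endpoints intro: definite_graph reparametrization
      simp: Pm_Fm_real differentiable_Qm isothermal_Qm Omega_eq_omegac Astr_eq Bstr_eq Dom_z_zbar)
qed

end
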